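(* Consider the base and perturbed optimal Bayesian inference models described in the context, and let $(s_n)$ be a sequence with $s_n\to 0_+$. There exists a constant $C$, which may depend on all parameters of the problem (such as $K$ and $S$) but not on $n$, such that for every $\lambda_n\in\mathcal{D}_{n,K}$, $$\big|\mathbb{E}\,F_{0,n}-\mathbb{E}\,F_n(\lambda_n)\big|\le C s_n .$$ Consequently $\mathbb{E}\,F_{0,n}$ and $\mathbb{E}\,F_n(\lambda_n)$ have the same limit as $n\to+\infty$, provided this limit exists.
   Context: All quantities are real. Fix an integer $K\ge1$ (independent of $n$) and $S>0$. A signal $X=(X_{ik})\in[-S,S]^{n\times K}$ is drawn from a prior $P_0(\cdot\mid\theta_0)$, where the hyper-parameter $\theta_0\in\Theta_0$ is itself random with distribution $P_{\theta_0}$. Data $\widetilde Y$ in a generic set $\widetilde{\mathcal Y}$ are drawn as $\widetilde Y\sim P_{\rm out}(\cdot\mid X,\theta_{\rm out})$, where $\theta_{\rm out}\in\Theta_{\rm out}$ is random with distribution $P_{\theta_{\rm out}}$; write $\theta=(\theta_0,\theta_{\rm out})$. The statistician knows $P_0$, $P_{\rm out}$ and $\theta$ (optimal Bayesian inference). The averaged free energy of the base model is $\mathbb{E}F_{0,n}=-\frac1n\mathbb{E}\ln\int dP_0(x\mid\theta_0)P_{\rm out}(\widetilde Y\mid x,\theta_{\rm out})$, with $\mathbb{E}$ over $(\theta,X,\widetilde Y)$. Let $\mathcal{D}_K$ be the set of symmetric $K\times K$ real matrices $\tilde\lambda$ with $\tilde\lambda_{kk'}=\tilde\lambda_{k'k}\in(1,2)$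 for $k\neq k'$ and $\tilde\lambda_{kk}\in(2K,2K+1)$ for all $k$, and $\mathcal D_{n,K}=s_n\mathcal D_K$ (these are symmetric positive definite). For $\lambda_n\in\mathcal D_{n,K}$ with unique positive definite square root $\lambda_n^{1/2}$, the perturbed model additionally observes $Y=X\lambda_n^{1/2}+Z\in\mathbb{R}^{n\times K}$, where the rows of $Z$ are i.i.d. $\mathcal N(0,I_K)$, independent of everything else. Define $\mathcal H_{\lambda_n}(x,Y)=\frac12\|x\lambda_n^{1/2}\|_F^2-\mathrm{Tr}(Y^\intercal x\lambda_n^{1/2})$ and the perturbed free energy $F_n(\lambda_n)=-\frac1n\ln\int dP_0(x\mid\theta_0)P_{\rm out}(\widetilde Y\mid x,\theta_{\rm out})e^{-\mathcal H_{\lambda_n}(x,Y)}$. In $\mathbb{E}F_n(\lambda_n)$ the expectation is over $(\theta,X,\widetilde Y,Y)$ with $\lambda_n$ fixed. *)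

theory Defs
  imports "HOL-Probability.Probability"
begin

text \<open>Matrices are represented as functions on index pairs (row, column); an n x K matrix
  is an element of the product space over {..<n} x {..<K} (extensional, undefined outside).
  K x K parameter matrices are functions nat x nat to real that vanish outside {..<K}^2.\<close>

definition idx :: "nat \<Rightarrow> nat \<Rightarrow> (nat \<times> nat) set" where
  "idx n K = {..<n} \<times> {..<K}"

definition Mat :: "nat \<Rightarrow> nat \<Rightarrow> (nat \<times> nat \<Rightarrow> real) measure" where
  "Mat n K = PiM (idx n K) (\<lambda>_. borel)"

definition std_normal :: "real measure" where
  "std_normal = density lborel std_normal_density"

definition Gauss :: "nat \<Rightarrow> nat \<Rightarrow> (nat \<times> nat \<Rightarrow> real) measure" where
  "Gauss n K = PiM (idx n K) (\<lambda>_. std_normal)"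

definition mmul :: "nat \<Rightarrow> (nat \<times> nat \<Rightarrow> real) \<Rightarrow> (nat \<times> nat \<Rightarrow> real) \<Rightarrow> (nat \<times> nat \<Rightarrow> real)" where
  "mmul K x R = (\<lambda>(i,k). \<Sum>l<K. x (i,l) * R (l,k))"

definition sqmat :: "nat \<Rightarrow> (nat \<times> nat \<Rightarrow> real) \<Rightarrow> bool" where
  "sqmat K L \<longleftrightarrow> (\<forall>i j. \<not> (i < K \<and> j < K) \<longrightarrow> L (i,j) = 0)"

definition symmetric_mat :: "nat \<Rightarrow> (nat \<times> nat \<Rightarrow> real) \<Rightarrow> bool" where
  "symmetric_mat K L \<longleftrightarrow> (\<forall>i<K. \<forall>j<K. L (i,j) = L (j,i))"

definition posdef_mat :: "nat \<Rightarrow> (nat \<times> nat \<Rightarrow> real) \<Rightarrow> bool" where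
  "posdef_mat K L \<longleftrightarrow> symmetric_mat K L \<and>
     (\<forall>v::nat \<Rightarrow> real. (\<exists>i<K. v i \<noteq> 0) \<longrightarrow> (\<Sum>i<K. \<Sum>j<K. v i * L (i,j) * v j) > 0)"

definition sqrtm :: "nat \<Rightarrow> (nat \<times> nat \<Rightarrow> real) \<Rightarrow> (nat \<times> nat \<Rightarrow> real)" where
  "sqrtm K L = (THE R. sqmat K R \<and> posdef_mat K R \<and>
       (\<forall>i<K. \<forall>j<K. (\<Sum>l<K. R (i,l) * R (l,j)) = L (i,j)))"

definition DK :: "nat \<Rightarrow> (nat \<times> nat \<Rightarrow> real) set" where
  "DK K = {L. sqmat K L \<and> symmetric_mat K L \<and>
     (\<forall>i<K. \<forall>j<K. i \<noteq> j \<longrightarrow> 1 < L (i,j) \<and> L (i,j) < 2) \<and>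
     (\<forall>i<K. 2 * real K < L (i,i) \<and> L (i,i) < 2 * real K + 1)}"

definition DnK :: "real \<Rightarrow> nat \<Rightarrow> (nat \<times> nat \<Rightarrow> real) set" where
  "DnK sn K = (\<lambda>L. (\<lambda>ij. sn * L ij)) ` DK K"

definition Ham :: "nat \<Rightarrow> nat \<Rightarrow> (nat \<times> nat \<Rightarrow> real) \<Rightarrow> (nat \<times> nat \<Rightarrow> real) \<Rightarrow> (nat \<times> nat \<Rightarrow> real) \<Rightarrow> real" where
  "Ham n K L x Y = (let xR = mmul K x (sqrtm K L) in
     (1/2) * (\<Sum>ik\<in>idx n K. (xR ik)^2) - (\<Sum>ik\<in>idx n K. Y ik * xR ik))"

definition law ::
  "'a measure \<Rightarrow> 'b measure \<Rightarrow> ('a \<Rightarrow> (nat \<times> nat \<Rightarrow> real) measure) \<Rightarrow> 'c measure \<Rightarrow>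
   ((nat \<times> nat \<Rightarrow> real) \<Rightarrow> 'b \<Rightarrow> 'c \<Rightarrow> real) \<Rightarrow> nat \<Rightarrow> nat \<Rightarrow>
   ('a \<times> 'b \<times> (nat \<times> nat \<Rightarrow> real) \<times> 'c \<times> (nat \<times> nat \<Rightarrow> real)) measure" where
  "law Pt0 Pto P0 \<mu> pout n K =
     bind Pt0 (\<lambda>t0. bind Pto (\<lambda>to. bind (P0 t0) (\<lambda>X.
       bind (density \<mu> (\<lambda>y. ennreal (pout X to y))) (\<lambda>y.
         bind (Gauss n K) (\<lambda>Z.
           return (Pt0 \<Otimes>\<^sub>M Pto \<Otimes>\<^sub>M Mat n K \<Otimes>\<^sub>M \<mu> \<Otimes>\<^sub>M Mat n K) (t0, to, X, y, Z))))))"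

definition F0 ::
  "('a \<Rightarrow> (nat \<times> nat \<Rightarrow> real) measure) \<Rightarrow> ((nat \<times> nat \<Rightarrow> real) \<Rightarrow> 'b \<Rightarrow> 'c \<Rightarrow> real) \<Rightarrow> nat \<Rightarrow>
   'a \<times> 'b \<times> (nat \<times> nat \<Rightarrow> real) \<times> 'c \<times> (nat \<times> nat \<Rightarrow> real) \<Rightarrow> real" where
  "F0 P0 pout n = (\<lambda>(t0, to, X, y, Z).
     - (1 / real n) * ln (\<integral>x. pout x to y \<partial>(P0 t0)))"

definition Fpert ::
  "('a \<Rightarrow> (nat \<times> nat \<Rightarrow> real) measure) \<Rightarrow> ((nat \<times> nat \<Rightarrow> real) \<Rightarrow> 'b \<Rightarrow> 'c \<Rightarrow> real) \<Rightarrow> nat \<Rightarrow> nat \<Rightarrow>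
   (nat \<times> nat \<Rightarrow> real) \<Rightarrow>
   'a \<times> 'b \<times> (nat \<times> nat \<Rightarrow> real) \<times> 'c \<times> (nat \<times> nat \<Rightarrow> real) \<Rightarrow> real" where
  "Fpert P0 pout n K L = (\<lambda>(t0, to, X, y, Z).
     (let Y = (\<lambda>ik. mmul K X (sqrtm K L) ik + Z ik) in
     - (1 / real n) * ln (\<integral>x. pout x to y * exp (- Ham n K L x Y) \<partial>(P0 t0))))"

end

theory Submission
  imports Defs
begin

text \<open>
  Fix the hyper-parameters, the signal \<open>X\<close> and the observation, and let \<open>R = \<lambda>\<^sub>n\<^sup>1\<^sup>/\<^sup>2\<close>.
  Then \<open>-H(x, X R + Z) = b(x) + \<langle>Z, x R\<rangle>\<close>; on the support of the prior every entry of \<open>x R\<close>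
  is bounded by \<open>\<beta> = K S max |R\<^sub>i\<^sub>j|\<close>, so \<open>|b| \<le> 3/2 n K \<beta>\<^sup>2\<close>. The difference of the two free
  energies is \<open>-1/n\<close> times the logarithm of a posterior average of \<open>exp (b(x) + \<langle>Z, x R\<rangle>)\<close>.
  Jensen's inequality bounds it above by \<open>3/2 K \<beta>\<^sup>2\<close> minus a term linear in \<open>Z\<close>, which averages
  to zero over the Gaussian noise. Below, averaging \<open>exp \<langle>Z, x R\<rangle>\<close> over \<open>Z\<close> gives
  \<open>exp (|x R|\<^sup>2/2) \<le> exp (n K \<beta>\<^sup>2/2)\<close>, and \<open>ln V \<le> ln m + V/m - 1\<close> turns this into \<open>-2 K \<beta>\<^sup>2\<close>.
  Since \<open>\<lambda>\<^sub>n / s\<^sub>n\<close> is diagonally dominant, \<open>R\<close> exists, is unique and has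
  \<open>\<beta>\<^sup>2 \<le> K\<^sup>2 S\<^sup>2 (2K + 1) s\<^sub>n\<close>, whence \<open>C = 2 K\<^sup>3 S\<^sup>2 (2K + 1)\<close>.
\<close>

lemma integral_measurable_subprob_algebra2:
  fixes f :: "'a \<Rightarrow> 'b \<Rightarrow> real"
  assumes f: "(\<lambda>(x, y). f x y) \<in> borel_measurable (M \<Otimes>\<^sub>M N)"
    and L: "L \<in> measurable M (subprob_algebra N)"
  shows "(\<lambda>x. \<integral>y. f x y \<partial>L x) \<in> borel_measurable M"
proof -
  have "(\<lambda>x. distr (L x) (M \<Otimes>\<^sub>M N) (\<lambda>y. (x, y))) \<in> measurable M (subprob_algebra (M \<Otimes>\<^sub>M N))"
    by (rule measurable_distr2[OF _ L]) (simp add: case_prod_unfold)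
  from measurable_compose[OF this integral_measurable_subprob_algebra[OF f]]
  show ?thesis
  proof (rule measurable_cong[THEN iffD1, rotated])
    fix x assume x: "x \<in> space M"
    have "(\<lambda>y. (x, y)) \<in> measurable (L x) (M \<Otimes>\<^sub>M N)"
      using x by (simp add: measurable_cong_sets[OF sets_kernel[OF L x] refl])
    then show "(\<integral>p. (\<lambda>(x, y). f x y) p \<partial>distr (L x) (M \<Otimes>\<^sub>M N) (\<lambda>y. (x, y))) = (\<integral>y. f x y \<partial>L x)"
      by (subst integral_distr) (use f in auto)
  qed
qed

lemma integrable_enn2real:
  assumes P: "P \<in> borel_measurable M" and fin: "(\<integral>\<^sup>+x. P x \<partial>M) < \<infinity>"
  shows "integrable M (\<lambda>x. enn2real (P x))"
    and "(\<integral>x. enn2real (P x) \<partial>M) = enn2real (\<integral>\<^sup>+x. P x \<partial>M)"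
proof -
  have "AE x in M. P x \<noteq> \<infinity>"
    using fin by (intro nn_integral_PInf_AE[OF P]) auto
  then have eq: "(\<integral>\<^sup>+x. ennreal (enn2real (P x)) \<partial>M) = (\<integral>\<^sup>+x. P x \<partial>M)"
    by (auto intro!: nn_integral_cong_AE elim!: eventually_mono simp: less_top)
  show "integrable M (\<lambda>x. enn2real (P x))"
    using P fin by (intro integrableI_nonneg) (simp_all add: eq)
  show "(\<integral>x. enn2real (P x) \<partial>M) = enn2real (\<integral>\<^sup>+x. P x \<partial>M)"
    using P by (subst integral_eq_nn_integral) (simp_all add: eq)
qed

lemma integral_eq_nn_integral_diff:
  fixes f :: "_ \<Rightarrow> real"
  assumes "f \<in> borel_measurable M"
    and "(\<integral>\<^sup>+x. ennreal (f x) \<partial>M) \<noteq> \<infinity>" "(\<integral>\<^sup>+x. ennreal (- f x) \<partial>M) \<noteq> \<infinity>"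
  shows "(\<integral>x. f x \<partial>M) = enn2real (\<integral>\<^sup>+x. ennreal (f x) \<partial>M) - enn2real (\<integral>\<^sup>+x. ennreal (- f x) \<partial>M)"
  using assms by (intro real_lebesgue_integral_def) (simp add: real_integrable_def less_top)

text \<open>The library's \<open>integral_bind\<close> needs a bounded integrand; here only integrability over
  the composite measure is assumed.\<close>
lemma integrable_integral_bind:
  fixes f :: "_ \<Rightarrow> real"
  assumes N[measurable]: "N \<in> measurable M (subprob_algebra K)"
    and ne: "space M \<noteq> {}"
    and f: "integrable (bind M N) f"
  shows "integrable M (\<lambda>x. \<integral>y. f y \<partial>N x)"
    and "(\<integral>y. f y \<partial>bind M N) = (\<integral>x. \<integral>y. f y \<partial>N x \<partial>M)"
proof -
  have fm[measurable]: "f \<in> borel_measurable K"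
    using borel_measurable_integrable[OF f]
    by (simp add: measurable_cong_sets[OF sets_bind[OF sets_kernel[OF N] ne] refl])
  define P where "P x = (\<integral>\<^sup>+y. ennreal (f y) \<partial>N x)" for x
  define Q where "Q x = (\<integral>\<^sup>+y. ennreal (- f y) \<partial>N x)" for x
  have Pm[measurable]: "P \<in> borel_measurable M" and Qm[measurable]: "Q \<in> borel_measurable M"
    unfolding P_def Q_def
    by (rule measurable_compose[OF N nn_integral_measurable_subprob_algebra]; simp)+
  have bP: "(\<integral>\<^sup>+y. ennreal (f y) \<partial>bind M N) = (\<integral>\<^sup>+x. P x \<partial>M)"
    and bQ: "(\<integral>\<^sup>+y. ennreal (- f y) \<partial>bind M N) = (\<integral>\<^sup>+x. Q x \<partial>M)"
    unfolding P_def Q_def by (rule nn_integral_bind[OF _ N]; simp)+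
  have finP: "(\<integral>\<^sup>+x. P x \<partial>M) < \<infinity>" and finQ: "(\<integral>\<^sup>+x. Q x \<partial>M) < \<infinity>"
    using f unfolding real_integrable_def bP[symmetric] bQ[symmetric] by (auto simp: less_top)
  have aeP: "AE x in M. P x \<noteq> \<infinity>" and aeQ: "AE x in M. Q x \<noteq> \<infinity>"
    using finP finQ by (intro nn_integral_PInf_AE; simp)+
  have ae: "AE x in M. (\<integral>y. f y \<partial>N x) = enn2real (P x) - enn2real (Q x)"
    using aeP aeQ AE_space
  proof eventually_elim
    case (elim x)
    have sx: "sets (N x) = sets K" using N elim(3) by (rule sets_kernel)
    have fx: "f \<in> borel_measurable (N x)" by (subst measurable_cong_sets[OF sx refl]) (rule fm)
    show ?case unfolding P_def Q_def
      by (rule integral_eq_nn_integral_diff[OF fx]) (use elim in \<open>simp_all add: P_def Q_def\<close>)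
  qed
  have im: "(\<lambda>x. \<integral>y. f y \<partial>N x) \<in> borel_measurable M"
    by (rule measurable_compose[OF N integral_measurable_subprob_algebra]) simp
  show "integrable M (\<lambda>x. \<integral>y. f y \<partial>N x)"
    using integrable_cong_AE[OF im _ ae] integrable_enn2real(1)[OF Pm finP]
      integrable_enn2real(1)[OF Qm finQ] by auto
  have "(\<integral>x. \<integral>y. f y \<partial>N x \<partial>M) = (\<integral>x. enn2real (P x) - enn2real (Q x) \<partial>M)"
    by (intro integral_cong_AE[OF im _ ae] borel_measurable_diff borel_measurable_enn2real Pm Qm)
  also have "\<dots> = enn2real (\<integral>\<^sup>+x. P x \<partial>M) - enn2real (\<integral>\<^sup>+x. Q x \<partial>M)"
    using integrable_enn2real[OF Pm finP] integrable_enn2real[OF Qm finQ] by simp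
  also have "\<dots> = (\<integral>y. f y \<partial>bind M N)"
    using real_lebesgue_integral_def[OF f] bP bQ by simp
  finally show "(\<integral>y. f y \<partial>bind M N) = (\<integral>x. \<integral>y. f y \<partial>N x \<partial>M)" by simp
qed

lemma integral_bind_le:
  fixes f :: "_ \<Rightarrow> real"
  assumes M: "prob_space M" and N: "N \<in> measurable M (subprob_algebra K)" and c: "0 \<le> c"
    and ae: "AE x in M. (\<integral>y. f y \<partial>N x) \<le> c"
  shows "(\<integral>y. f y \<partial>bind M N) \<le> c"
proof (cases "integrable (bind M N) f")
  case True
  interpret prob_space M by (rule M)
  note I = integrable_integral_bind[OF N not_empty True]
  have "(\<integral>y. f y \<partial>bind M N) = (\<integral>x. \<integral>y. f y \<partial>N x \<partial>M)" by (rule I(2))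
  also have "\<dots> \<le> (\<integral>x. c \<partial>M)"
    by (rule integral_mono_AE[OF I(1) _ ae]) simp
  also have "\<dots> = c" by (simp add: prob_space)
  finally show ?thesis .
next
  case False
  then show ?thesis using c by (simp add: not_integrable_integral_eq)
qed

lemma nn_integral_bind_le:
  assumes M: "prob_space M" and N: "N \<in> measurable M (subprob_algebra K)"
    and f: "f \<in> borel_measurable K"
    and ae: "AE x in M. (\<integral>\<^sup>+y. f y \<partial>N x) \<le> c"
  shows "(\<integral>\<^sup>+y. f y \<partial>bind M N) \<le> c"
proof -
  interpret prob_space M by (rule M)
  have "(\<integral>\<^sup>+y. f y \<partial>bind M N) = (\<integral>\<^sup>+x. \<integral>\<^sup>+y. f y \<partial>N x \<partial>M)"
    by (rule nn_integral_bind[OF f N])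
  also have "\<dots> \<le> (\<integral>\<^sup>+x. c \<partial>M)" by (rule nn_integral_mono_AE[OF ae])
  also have "\<dots> = c" by (simp add: emeasure_space_1)
  finally show ?thesis .
qed

lemma prob_space_std_normal: "prob_space std_normal"
  unfolding std_normal_def by (rule prob_space_normal_density) simp

lemma prob_space_Gauss: "prob_space (Gauss n K)"
  unfolding Gauss_def by (intro prob_space_PiM prob_space_std_normal)

lemma space_std_normal[simp]: "space std_normal = UNIV"
  unfolding std_normal_def by simp

lemma sets_std_normal[simp]: "sets std_normal = sets borel"
  unfolding std_normal_def by simp

lemma measurable_std_normal: "measurable std_normal N = measurable borel N"
  by (rule measurable_cong_sets) simp_all

lemma measurable_Mat_component[measurable]: "(\<lambda>x. x j) \<in> borel_measurable (Mat n K)"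
proof (cases "j \<in> idx n K")
  case True
  then show ?thesis unfolding Mat_def by (rule measurable_component_singleton)
next
  case False
  have sp: "x j = undefined" if "x \<in> space (Mat n K)" for x
    using False that by (cases j) (auto simp: Mat_def space_PiM PiE_def extensional_def)
  show ?thesis
    by (rule measurable_cong[THEN iffD2, OF sp measurable_const[of undefined]]) simp_all
qed

lemma sets_Gauss: "sets (Gauss n K) = sets (Mat n K)"
  unfolding Gauss_def Mat_def by (intro sets_PiM_cong) simp_all

lemma finite_idx[simp]: "finite (idx n K)" unfolding idx_def by simp
lemma card_idx: "card (idx n K) = n * K" unfolding idx_def by (simp add: card_cartesian_product)

lemma nn_integral_exp_std_normal:
  "(\<integral>\<^sup>+z. ennreal (exp (a * z)) \<partial>std_normal) = ennreal (exp (a^2/2))"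
proof -
  have eq: "std_normal_density z * exp (a * z) = exp (a^2/2) * normal_density a 1 z" for z
  proof -
    have e: "- z\<^sup>2 / 2 + a * z = a^2/2 + (- (z - a)\<^sup>2 / 2)"
      by (simp add: power2_eq_square field_simps)
    have "exp (- z\<^sup>2 / 2) * exp (a * z) = exp (- z\<^sup>2 / 2 + a * z)"
      by (rule exp_add[symmetric])
    also have "\<dots> = exp (a^2/2 + (- (z - a)\<^sup>2 / 2))" by (simp only: e)
    also have "\<dots> = exp (a^2/2) * exp (- (z - a)\<^sup>2 / 2)" by (rule exp_add)
    finally have "exp (- z\<^sup>2 / 2) * exp (a * z) = exp (a^2/2) * exp (- (z - a)\<^sup>2 / 2)" .
    then show ?thesis by (simp add: normal_density_def std_normal_density_def)
  qed
  have "(\<integral>\<^sup>+z. ennreal (exp (a * z)) \<partial>std_normal)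
      = (\<integral>\<^sup>+z. ennreal (std_normal_density z) * ennreal (exp (a * z)) \<partial>lborel)"
    unfolding std_normal_def by (subst nn_integral_density) auto
  also have "\<dots> = (\<integral>\<^sup>+z. ennreal (exp (a^2/2)) * ennreal (normal_density a 1 z) \<partial>lborel)"
    by (intro nn_integral_cong) (simp only: ennreal_mult[symmetric] eq normal_density_nonneg exp_ge_zero)
  also have "\<dots> = ennreal (exp (a^2/2)) * (\<integral>\<^sup>+z. ennreal (normal_density a 1 z) \<partial>lborel)"
    by (rule nn_integral_cmult) simp
  also have "(\<integral>\<^sup>+z. ennreal (normal_density a 1 z) \<partial>lborel) = 1"
  proof -
    interpret prob_space "density lborel (normal_density a 1)"
      by (rule prob_space_normal_density) simp
    show ?thesis using emeasure_space_1 by (simp add: emeasure_density)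
  qed
  finally show ?thesis by simp
qed

lemma nn_integral_exp_Gauss:
  "(\<integral>\<^sup>+Z. ennreal (exp (\<Sum>ik\<in>idx n K. a ik * Z ik)) \<partial>Gauss n K)
     = ennreal (exp (\<Sum>ik\<in>idx n K. (a ik)^2/2))"
proof -
  interpret product_prob_space "\<lambda>_. std_normal" "idx n K"
    by (simp add: product_prob_space_def product_prob_space_axioms_def prob_space_std_normal
        product_sigma_finite_def prob_space_imp_sigma_finite)
  have "(\<integral>\<^sup>+Z. ennreal (exp (\<Sum>ik\<in>idx n K. a ik * Z ik)) \<partial>Gauss n K)
      = (\<integral>\<^sup>+Z. (\<Prod>ik\<in>idx n K. ennreal (exp (a ik * Z ik))) \<partial>Gauss n K)"
    by (intro nn_integral_cong) (simp add: exp_sum[OF finite_idx] prod_ennreal)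
  also have "\<dots> = (\<Prod>ik\<in>idx n K. (\<integral>\<^sup>+z. ennreal (exp (a ik * z)) \<partial>std_normal))"
    unfolding Gauss_def by (rule product_nn_integral_prod[OF finite_idx]) (simp add: measurable_std_normal)
  also have "\<dots> = (\<Prod>ik\<in>idx n K. ennreal (exp ((a ik)^2/2)))"
    by (simp add: nn_integral_exp_std_normal)
  also have "\<dots> = ennreal (exp (\<Sum>ik\<in>idx n K. (a ik)^2/2))"
    by (simp add: exp_sum[OF finite_idx] prod_ennreal)
  finally show ?thesis .
qed

lemma distr_Gauss_component:
  assumes "ik \<in> idx n K"
  shows "distr (Gauss n K) std_normal (\<lambda>Z. Z ik) = std_normal"
  unfolding Gauss_def using assms by (intro distr_PiM_component prob_space_std_normal)

lemma std_normal_abs_moment: "integrable std_normal (\<lambda>z. \<bar>z\<bar>)" "(\<integral>z. \<bar>z\<bar> \<partial>std_normal) \<le> 1"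
proof -
  have i: "integrable lborel (\<lambda>x. std_normal_density x * \<bar>x\<bar>)"
    using integrable_std_normal_moment_abs[of 1] by simp
  show "integrable std_normal (\<lambda>z. \<bar>z\<bar>)"
    unfolding std_normal_def by (subst integrable_density) (simp_all add: i)
  have "(\<integral>z. \<bar>z\<bar> \<partial>std_normal) = (\<integral>x. std_normal_density x * \<bar>x\<bar> \<partial>lborel)"
    unfolding std_normal_def by (subst integral_density) auto
  also have "\<dots> = sqrt (2/pi)"
    using integral_std_normal_moment_abs_odd[of 0] by simp
  also have "\<dots> \<le> 1"
    by (subst real_sqrt_le_1_iff) (use pi_gt3 in simp)
  finally show "(\<integral>z. \<bar>z\<bar> \<partial>std_normal) \<le> 1" .
qed

lemma std_normal_mean: "integrable std_normal (\<lambda>z. z)" "(\<integral>z. z \<partial>std_normal) = 0"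
proof -
  have i: "integrable lborel (\<lambda>x. std_normal_density x * x)"
    using integrable_std_normal_moment[of 1] by simp
  show "integrable std_normal (\<lambda>z. z)"
    unfolding std_normal_def by (subst integrable_density) (simp_all add: i)
  have "(\<integral>z. z \<partial>std_normal) = (\<integral>x. std_normal_density x * x \<partial>lborel)"
    unfolding std_normal_def by (subst integral_density) auto
  also have "\<dots> = 0"
    using integral_std_normal_moment_odd[of 0] by simp
  finally show "(\<integral>z. z \<partial>std_normal) = 0" .
qed

lemma Gauss_coordinate_moments:
  assumes "ik \<in> idx n K"
  shows "integrable (Gauss n K) (\<lambda>Z. Z ik)" "(\<integral>Z. Z ik \<partial>Gauss n K) = 0"
    "integrable (Gauss n K) (\<lambda>Z. \<bar>Z ik\<bar>)" "(\<integral>Z. \<bar>Z ik\<bar> \<partial>Gauss n K) \<le> 1"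
proof -
  have m: "(\<lambda>Z. Z ik) \<in> measurable (Gauss n K) std_normal"
    unfolding Gauss_def using assms by (rule measurable_component_singleton)
  note D = distr_Gauss_component[OF assms]
  have mz: "(\<lambda>z. z) \<in> borel_measurable std_normal" by (simp add: measurable_std_normal)
  have ma: "(\<lambda>z. \<bar>z\<bar>) \<in> borel_measurable std_normal" by (simp add: measurable_std_normal)
  have "integrable (distr (Gauss n K) std_normal (\<lambda>Z. Z ik)) (\<lambda>z. z)"
    unfolding D by (rule std_normal_mean(1))
  then show "integrable (Gauss n K) (\<lambda>Z. Z ik)"
    by (simp only: integrable_distr_eq[OF m mz])
  have "(\<integral>z. z \<partial>distr (Gauss n K) std_normal (\<lambda>Z. Z ik)) = 0"
    unfolding D by (rule std_normal_mean(2))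
  then show "(\<integral>Z. Z ik \<partial>Gauss n K) = 0"
    by (simp only: integral_distr[OF m mz])
  have "integrable (distr (Gauss n K) std_normal (\<lambda>Z. Z ik)) (\<lambda>z. \<bar>z\<bar>)"
    unfolding D by (rule std_normal_abs_moment(1))
  then show "integrable (Gauss n K) (\<lambda>Z. \<bar>Z ik\<bar>)"
    by (simp only: integrable_distr_eq[OF m ma])
  have "(\<integral>z. \<bar>z\<bar> \<partial>distr (Gauss n K) std_normal (\<lambda>Z. Z ik)) \<le> 1"
    unfolding D by (rule std_normal_abs_moment(2))
  then show "(\<integral>Z. \<bar>Z ik\<bar> \<partial>Gauss n K) \<le> 1"
    by (simp only: integral_distr[OF m ma])
qed

definition row_sum_le :: "nat \<Rightarrow> (nat \<times> nat \<Rightarrow> real) \<Rightarrow> real \<Rightarrow> bool" where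
  "row_sum_le K A a \<longleftrightarrow> (\<forall>i<K. (\<Sum>j<K. \<bar>A (i,j)\<bar>) \<le> a)"

lemma mmul_apply: "mmul K A B (i,j) = (\<Sum>l<K. A (i,l) * B (l,j))"
  by (simp add: mmul_def)

lemma row_sum_le_mmul:
  assumes "row_sum_le K A a" "row_sum_le K B b" "0 \<le> b"
  shows "row_sum_le K (mmul K A B) (a*b)"
  unfolding row_sum_le_def
proof (intro allI impI)
  fix i assume i: "i < K"
  have "(\<Sum>j<K. \<bar>mmul K A B (i,j)\<bar>) \<le> (\<Sum>j<K. \<Sum>l<K. \<bar>A (i,l)\<bar> * \<bar>B (l,j)\<bar>)"
    unfolding mmul_apply by (intro sum_mono order.trans[OF sum_abs]) (simp add: abs_mult)
  also have "\<dots> = (\<Sum>l<K. \<bar>A (i,l)\<bar> * (\<Sum>j<K. \<bar>B (l,j)\<bar>))"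
    by (subst sum.swap) (simp add: sum_distrib_left)
  also have "\<dots> \<le> (\<Sum>l<K. \<bar>A (i,l)\<bar> * b)"
    using assms(2) unfolding row_sum_le_def by (intro sum_mono mult_left_mono) auto
  also have "\<dots> = (\<Sum>l<K. \<bar>A (i,l)\<bar>) * b" by (simp add: sum_distrib_right)
  also have "\<dots> \<le> a * b"
    using assms(1) i assms(3) unfolding row_sum_le_def by (intro mult_right_mono) auto
  finally show "(\<Sum>j<K. \<bar>mmul K A B (i,j)\<bar>) \<le> a * b" .
qed

lemma row_sum_le_add:
  "row_sum_le K A a \<Longrightarrow> row_sum_le K B b \<Longrightarrow> row_sum_le K (\<lambda>ij. A ij + B ij) (a + b)"
  unfolding row_sum_le_def
proof (intro allI impI)
  fix i assume h: "\<forall>i<K. (\<Sum>j<K. \<bar>A (i, j)\<bar>) \<le> a" "\<forall>i<K. (\<Sum>j<K. \<bar>B (i, j)\<bar>) \<le> b" "i < K"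
  have "(\<Sum>j<K. \<bar>A (i, j) + B (i, j)\<bar>) \<le> (\<Sum>j<K. \<bar>A (i, j)\<bar> + \<bar>B (i, j)\<bar>)"
    by (intro sum_mono abs_triangle_ineq)
  also have "\<dots> = (\<Sum>j<K. \<bar>A (i, j)\<bar>) + (\<Sum>j<K. \<bar>B (i, j)\<bar>)" by (simp add: sum.distrib)
  finally show "(\<Sum>j<K. \<bar>A (i, j) + B (i, j)\<bar>) \<le> a + b" using h by force
qed

lemma row_sum_le_scale: "row_sum_le K A a \<Longrightarrow> 0 \<le> c \<Longrightarrow> row_sum_le K (\<lambda>ij. c * A ij) (c * a)"
  unfolding row_sum_le_def
    by (auto simp: abs_mult sum_distrib_left[symmetric] intro: mult_left_mono)

lemma row_sum_le_entry: "row_sum_le K A a \<Longrightarrow> i < K \<Longrightarrow> j < K \<Longrightarrow> \<bar>A (i,j)\<bar> \<le> a"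
  unfolding row_sum_le_def
  by (metis (no_types, lifting) finite_lessThan lessThan_iff member_le_sum abs_ge_zero order_trans)

lemma row_sum_le_cong_mono:
  assumes "row_sum_le K A a" "\<And>i j. i < K \<Longrightarrow> j < K \<Longrightarrow> A (i,j) = B (i,j)" "a \<le> b"
  shows "row_sum_le K B b"
  using assms
    unfolding row_sum_le_def by (metis (no_types, lifting) lessThan_iff order_trans sum.cong)

lemma row_sum_le_zero: "0 \<le> a \<Longrightarrow> row_sum_le K (\<lambda>_. 0) a"
  unfolding row_sum_le_def by simp

lemma abs_mult_le_half_sum_squares: "\<bar>x * (y::real)\<bar> \<le> (x^2 + y^2) / 2"
  using sum_squares_bound[of "\<bar>x\<bar>" "\<bar>y\<bar>"] by (simp add: abs_mult)

lemma abs_quadratic_form_le: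
  assumes rowB: "row_sum_le K B r" and sym: "\<And>i j. i < K \<Longrightarrow> j < K \<Longrightarrow> B (i,j) = B (j,i)"
  shows "\<bar>\<Sum>i<K. \<Sum>j<K. v i * B (i,j) * v j\<bar> \<le> r * (\<Sum>i<K. (v i)^2)"
proof -
  have swap: "(\<Sum>i<K. \<Sum>j<K. \<bar>B (i,j)\<bar> * (v j)^2) = (\<Sum>i<K. \<Sum>j<K. \<bar>B (i,j)\<bar> * (v i)^2)"
    by (subst sum.swap) (use sym in \<open>auto intro!: sum.cong\<close>)
  have entry: "\<bar>v i * B (i,j) * v j\<bar> \<le> \<bar>B (i,j)\<bar> * (((v i)^2 + (v j)^2) / 2)" for i j
    using mult_left_mono[OF abs_mult_le_half_sum_squares[of "v i" "v j"], of "\<bar>B (i,j)\<bar>"]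
    by (simp add: abs_mult mult_ac)
  have "\<bar>\<Sum>i<K. \<Sum>j<K. v i * B (i,j) * v j\<bar> \<le> (\<Sum>i<K. \<Sum>j<K. \<bar>v i * B (i,j) * v j\<bar>)"
    by (rule order.trans[OF sum_abs sum_mono[OF sum_abs]])
  also have "\<dots> \<le> (\<Sum>i<K. \<Sum>j<K. \<bar>B (i,j)\<bar> * (((v i)^2 + (v j)^2) / 2))"
    by (intro sum_mono entry)
  also have "\<dots> = ((\<Sum>i<K. \<Sum>j<K. \<bar>B (i,j)\<bar> * (v i)^2) + (\<Sum>i<K. \<Sum>j<K. \<bar>B (i,j)\<bar> * (v j)^2)) / 2"
    by (simp add: sum.distrib[symmetric] sum_divide_distrib ring_distribs)
  also have "\<dots> = (\<Sum>i<K. (v i)^2 * (\<Sum>j<K. \<bar>B (i,j)\<bar>))"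
    unfolding swap by (simp add: sum_distrib_left mult.commute)
  also have "\<dots> \<le> (\<Sum>i<K. (v i)^2 * r)"
    using rowB unfolding row_sum_le_def by (intro sum_mono mult_left_mono) auto
  also have "\<dots> = r * (\<Sum>i<K. (v i)^2)" by (simp add: sum_distrib_left mult.commute)
  finally show ?thesis .
qed

primrec sqrt_iter :: "nat \<Rightarrow> (nat \<times> nat \<Rightarrow> real) \<Rightarrow> nat \<Rightarrow> (nat \<times> nat \<Rightarrow> real)" where
  "sqrt_iter K A 0 = (\<lambda>_. 0)"
| "sqrt_iter K A (Suc m) = (\<lambda>ij. (A ij + mmul K (sqrt_iter K A m) (sqrt_iter K A m) ij) / 2)"

text \<open>With \<open>sqrt_mat = I - B\<close>, the equation \<open>sqrt_mat\<^sup>2 = I - A\<close> becomes the fixed point equation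
  \<open>B = (A + B\<^sup>2) / 2\<close>. All iterates have row sums at most \<open>r = (1 + a) / 2 < 1\<close>, so the
  successive differences shrink geometrically and the iteration converges.\<close>
locale sqrt_I_minus =
  fixes K :: nat and A :: "nat \<times> nat \<Rightarrow> real" and a :: real
  assumes rowA: "row_sum_le K A a" and a0: "0 \<le> a" and a1: "a < 1"
    and symA: "\<And>i j. i < K \<Longrightarrow> j < K \<Longrightarrow> A (i,j) = A (j,i)"
begin

definition "r = (1 + a) / 2"

lemma r0: "0 \<le> r" and r1: "r < 1" and ar: "(a + r * r) / 2 \<le> r"
proof -
  show "0 \<le> r" "r < 1" using a0 a1 by (auto simp: r_def)
  have "a * a \<le> a" using a0 a1 mult_right_mono[of a 1 a] by simp
  then have "(1 - r)^2 \<le> 1 - a" using a0 a1 by (simp add: r_def power2_eq_square field_simps)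
  then show "(a + r * r) / 2 \<le> r" by (simp add: power2_eq_square algebra_simps)
qed

abbreviation "B m \<equiv> sqrt_iter K A m"

lemma row_sum_iter: "row_sum_le K (B m) r"
proof (induction m)
  case 0 then show ?case using r0 by (simp add: row_sum_le_zero)
next
  case (Suc m)
  have "row_sum_le K (mmul K (B m) (B m)) (r * r)" by (rule row_sum_le_mmul[OF Suc Suc r0])
  then have "row_sum_le K (\<lambda>ij. A ij + mmul K (B m) (B m) ij) (a + r * r)"
    by (rule row_sum_le_add[OF rowA])
  then have "row_sum_le K (\<lambda>ij. (1/2) * (A ij + mmul K (B m) (B m) ij)) ((1/2) * (a + r * r))"
    by (rule row_sum_le_scale) simp
  then show ?case by (rule row_sum_le_cong_mono) (simp, use ar in linarith)
qed

lemma iter_sym: "i < K \<Longrightarrow> j < K \<Longrightarrow> B m (i,j) = B m (j,i)"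
proof (induction m arbitrary: i j)
  case 0 then show ?case by simp
next
  case (Suc m)
  have "mmul K (B m) (B m) (i,j) = mmul K (B m) (B m) (j,i)"
    unfolding mmul_apply using Suc by (intro sum.cong) (auto simp: mult.commute)
  then show ?case using symA[OF Suc.prems] by simp
qed

definition "iter_diff m = (\<lambda>ij. B (Suc m) ij - B m ij)"

lemma iter_diff_Suc:
  "iter_diff (Suc m) ij = (mmul K (B (Suc m)) (iter_diff m) ij + mmul K (iter_diff m) (B m) ij) / 2"
proof -
  obtain i j where ij: "ij = (i,j)" by force
  have "mmul K (B (Suc m)) (B (Suc m)) (i,j) - mmul K (B m) (B m) (i,j)
     = mmul K (B (Suc m)) (iter_diff m) (i,j) + mmul K (iter_diff m) (B m) (i,j)"
    unfolding mmul_apply iter_diff_def sum_subtractf[symmetric] sum.distrib[symmetric]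
    by (intro sum.cong refl) (simp add: algebra_simps)
  then show ?thesis unfolding iter_diff_def ij by (simp add: field_simps)
qed

lemma row_sum_iter_diff: "row_sum_le K (iter_diff m) (a / 2 * r ^ m)"
proof (induction m)
  case 0
  have "row_sum_le K (\<lambda>ij. (1/2) * A ij) ((1/2) * a)" by (rule row_sum_le_scale[OF rowA]) simp
  then show ?case by (rule row_sum_le_cong_mono) (simp_all add: iter_diff_def mmul_apply)
next
  case (Suc m)
  have d0: "0 \<le> a / 2 * r ^ m" using a0 r0 by simp
  have "row_sum_le K (mmul K (B (Suc m)) (iter_diff m)) (r * (a / 2 * r ^ m))"
    by (rule row_sum_le_mmul[OF row_sum_iter Suc d0])
  moreover have "row_sum_le K (mmul K (iter_diff m) (B m)) ((a / 2 * r ^ m) * r)"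
    by (rule row_sum_le_mmul[OF Suc row_sum_iter r0])
  ultimately have "row_sum_le K
      (\<lambda>ij. mmul K (B (Suc m)) (iter_diff m) ij + mmul K (iter_diff m) (B m) ij)
      (r * (a / 2 * r ^ m) + (a / 2 * r ^ m) * r)"
    by (rule row_sum_le_add)
  then have "row_sum_le K
      (\<lambda>ij. (1/2) * (mmul K (B (Suc m)) (iter_diff m) ij + mmul K (iter_diff m) (B m) ij))
      ((1/2) * (r * (a / 2 * r ^ m) + (a / 2 * r ^ m) * r))"
    by (rule row_sum_le_scale) simp
  then show ?case by (rule row_sum_le_cong_mono) (simp_all add: iter_diff_Suc algebra_simps)
qed

lemma abs_iter_diff_le: "i < K \<Longrightarrow> j < K \<Longrightarrow> \<bar>iter_diff m (i,j)\<bar> \<le> a / 2 * r ^ m"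
  using row_sum_le_entry[OF row_sum_iter_diff] by blast

lemma summable_iter_diff: "i < K \<Longrightarrow> j < K \<Longrightarrow> summable (\<lambda>m. iter_diff m (i,j))"
  by (rule summable_comparison_test'[where g="\<lambda>m. a / 2 * r ^ m"])
     (use abs_iter_diff_le r0 r1 in \<open>simp_all add: summable_geometric\<close>)

lemma iter_eq_sum_diffs: "B m ij = (\<Sum>k<m. iter_diff k ij)"
  by (induction m) (simp_all add: iter_diff_def)

definition "iter_lim = (\<lambda>(i,j). if i < K \<and> j < K then (\<Sum>m. iter_diff m (i,j)) else 0)"

lemma iter_tendsto: "i < K \<Longrightarrow> j < K \<Longrightarrow> (\<lambda>m. B m (i,j)) \<longlonglongrightarrow> iter_lim (i,j)"
  unfolding iter_eq_sum_diffs iter_lim_def using summable_iter_diff by (simp add: summable_LIMSEQ)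

lemma iter_lim_fixpoint: assumes "i < K" "j < K"
  shows "iter_lim (i,j) = (A (i,j) + (\<Sum>l<K. iter_lim (i,l) * iter_lim (l,j))) / 2"
proof -
  have "(\<lambda>m. B (Suc m) (i,j)) \<longlonglongrightarrow> iter_lim (i,j)"
    using iter_tendsto[OF assms] by (rule LIMSEQ_Suc)
  moreover have "(\<lambda>m. B (Suc m) (i,j)) \<longlonglongrightarrow> (A (i,j) + (\<Sum>l<K. iter_lim (i,l) * iter_lim (l,j))) / 2"
    unfolding sqrt_iter.simps mmul_apply using assms
    by (intro tendsto_intros iter_tendsto) auto
  ultimately show ?thesis by (rule LIMSEQ_unique)
qed

lemma row_sum_iter_lim: "row_sum_le K iter_lim r"
  unfolding row_sum_le_def
proof (intro allI impI)
  fix i assume i: "i < K"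
  have "(\<lambda>m. \<Sum>j<K. \<bar>B m (i,j)\<bar>) \<longlonglongrightarrow> (\<Sum>j<K. \<bar>iter_lim (i,j)\<bar>)"
    using i by (intro tendsto_intros iter_tendsto) auto
  moreover have "\<And>m. (\<Sum>j<K. \<bar>B m (i,j)\<bar>) \<le> r" using row_sum_iter i unfolding row_sum_le_def by blast
  ultimately show "(\<Sum>j<K. \<bar>iter_lim (i,j)\<bar>) \<le> r"
    by (intro LIMSEQ_le_const2) auto
qed

lemma iter_lim_sym: assumes "i < K" "j < K" shows "iter_lim (i,j) = iter_lim (j,i)"
proof -
  have "(\<lambda>m. B m (i,j)) \<longlonglongrightarrow> iter_lim (j,i)" using iter_tendsto[of j i] iter_sym[of j i] assms by simp
  then show ?thesis using iter_tendsto[OF assms] by (rule LIMSEQ_unique[rotated])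
qed

definition "sqrt_mat =
  (\<lambda>(i,j). if i < K \<and> j < K then (if i = j then 1 else 0) - iter_lim (i,j) else 0)"

lemma sqrt_mat_square: assumes "i < K" "j < K"
  shows "(\<Sum>l<K. sqrt_mat (i,l) * sqrt_mat (l,j)) = (if i = j then 1 else 0) - A (i,j)"
proof -
  have "(\<Sum>l<K. sqrt_mat (i,l) * sqrt_mat (l,j))
      = (\<Sum>l<K. (if l = i then (if l = j then 1 else 0) else 0)
          - (if l = i then iter_lim (l,j) else 0) - (if l = j then iter_lim (i,l) else 0)
          + iter_lim (i,l) * iter_lim (l,j))"
    using assms by (intro sum.cong refl) (auto simp: sqrt_mat_def algebra_simps)
  also have "\<dots> = (if i = j then 1 else 0) - iter_lim (i,j) - iter_lim (i,j)
      + (\<Sum>l<K. iter_lim (i,l) * iter_lim (l,j))"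
    using assms by (simp add: sum.distrib sum_subtractf)
  also have "\<dots> = (if i = j then 1 else 0) - A (i,j)"
    using iter_lim_fixpoint[OF assms] by simp
  finally show ?thesis .
qed

lemma sqrt_mat_sym: "sqrt_mat (i,j) = sqrt_mat (j,i)"
  unfolding sqrt_mat_def using iter_lim_sym by auto

lemma sqmat_sqrt_mat: "sqmat K sqrt_mat"
  unfolding sqmat_def sqrt_mat_def by auto

lemma sqrt_mat_quadratic_form_ge:
  "(\<Sum>i<K. \<Sum>j<K. v i * sqrt_mat (i,j) * v j) \<ge> (1 - r) * (\<Sum>i<K. (v i)^2)"
proof -
  have "(\<Sum>i<K. \<Sum>j<K. v i * sqrt_mat (i,j) * v j)
      = (\<Sum>i<K. \<Sum>j<K. (if j = i then v i * v j else 0) - v i * iter_lim (i,j) * v j)"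
    by (intro sum.cong refl) (auto simp: sqrt_mat_def algebra_simps)
  also have "\<dots> = (\<Sum>i<K. (v i)^2) - (\<Sum>i<K. \<Sum>j<K. v i * iter_lim (i,j) * v j)"
    by (simp add: sum_subtractf power2_eq_square)
  finally have e: "(\<Sum>i<K. \<Sum>j<K. v i * sqrt_mat (i,j) * v j)
      = (\<Sum>i<K. (v i)^2) - (\<Sum>i<K. \<Sum>j<K. v i * iter_lim (i,j) * v j)" .
  have "\<bar>\<Sum>i<K. \<Sum>j<K. v i * iter_lim (i,j) * v j\<bar> \<le> r * (\<Sum>i<K. (v i)^2)"
    by (rule abs_quadratic_form_le[OF row_sum_iter_lim iter_lim_sym])
  then show ?thesis unfolding e by (simp add: algebra_simps)
qed

lemma posdef_sqrt_mat: "posdef_mat K sqrt_mat"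
  unfolding posdef_mat_def symmetric_mat_def
proof (intro conjI allI impI)
  show "\<And>i j. i < K \<Longrightarrow> j < K \<Longrightarrow> sqrt_mat (i,j) = sqrt_mat (j,i)" by (rule sqrt_mat_sym)
  fix v :: "nat \<Rightarrow> real" assume "\<exists>i<K. v i \<noteq> 0"
  then obtain i where i: "i < K" "v i \<noteq> 0" by blast
  have "0 < (v i)^2" using i by simp
  also have "\<dots> \<le> (\<Sum>i<K. (v i)^2)" using i by (intro member_le_sum) auto
  finally have "0 < (1 - r) * (\<Sum>i<K. (v i)^2)" using r1 by simp
  also have "\<dots> \<le> (\<Sum>i<K. \<Sum>j<K. v i * sqrt_mat (i,j) * v j)" by (rule sqrt_mat_quadratic_form_ge)
  finally show "0 < (\<Sum>i<K. \<Sum>j<K. v i * sqrt_mat (i,j) * v j)" .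
qed

end

lemma posdef_mat_scale:
  assumes "posdef_mat K R" "0 < c"
  shows "posdef_mat K (\<lambda>ij. c * R ij)"
proof -
  have "(\<Sum>i<K. \<Sum>j<K. v i * (c * R (i,j)) * v j) = c * (\<Sum>i<K. \<Sum>j<K. v i * R (i,j) * v j)"
    for v :: "nat \<Rightarrow> real"
    by (simp add: sum_distrib_left mult_ac)
  then show ?thesis using assms unfolding posdef_mat_def symmetric_mat_def by simp
qed

lemma DK_shift_row_sum_le:
  assumes M: "M \<in> DK K"
  defines "c \<equiv> 2 * real K + 1"
  shows "row_sum_le K (\<lambda>(i,j). (if i = j then 1 else 0) - M (i,j) / c) ((2 * real K - 1) / c)"
  unfolding row_sum_le_def
proof (intro allI impI)
  fix i assume i: "i < K"
  have c0: "c > 0" unfolding c_def by simp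
  have entry: "\<bar>(if i = j then 1 else 0) - M (i,j) / c\<bar> \<le> 2 / c - (if j = i then 1 / c else 0)"
    if j: "j < K" for j
  proof (cases "i = j")
    case True
    have "c - 1 < M (j,j)" "M (j,j) < c" using M j unfolding DK_def c_def by auto
    then have "0 \<le> (c - M (j,j)) / c" "(c - M (j,j)) / c \<le> 1 / c"
      using c0 by (simp_all add: divide_right_mono)
    moreover have "1 - M (j,j) / c = (c - M (j,j)) / c" using c0 by (simp add: field_simps)
    ultimately show ?thesis using True by simp
  next
    case False
    then have "1 < M (i,j)" "M (i,j) < 2" using M i j unfolding DK_def by auto
    then show ?thesis using False c0 by (simp add: field_simps)
  qed
  have "(\<Sum>j<K. \<bar>(\<lambda>(i,j). (if i = j then 1 else 0) - M (i,j) / c) (i,j)\<bar>)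
      \<le> (\<Sum>j<K. 2 / c - (if j = i then 1 / c else 0))"
    using entry by (intro sum_mono) auto
  also have "\<dots> = real K * (2 / c) - 1 / c" using i by (simp add: sum_subtractf)
  also have "\<dots> = (2 * real K - 1) / c" using c0 by (simp add: field_simps)
  finally show "(\<Sum>j<K. \<bar>(\<lambda>(i,j). (if i = j then 1 else 0) - M (i,j) / c) (i,j)\<bar>)
      \<le> (2 * real K - 1) / c" .
qed

text \<open>Every \<open>M \<in> D_K\<close> is \<open>c (I - A)\<close> with \<open>c = 2K + 1\<close> and \<open>A\<close> of row sums below \<open>1\<close>
  (diagonal dominance), so \<open>sqrt (s c)\<close> times the square root of \<open>I - A\<close> is one of \<open>s M\<close>.\<close>
lemma posdef_sqrt_DnK_exists:
  assumes K: "K \<ge> 1" and M: "M \<in> DK K" and s: "0 < s"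
  shows "\<exists>R. sqmat K R \<and> posdef_mat K R \<and>
       (\<forall>i<K. \<forall>j<K. (\<Sum>l<K. R (i,l) * R (l,j)) = s * M (i,j))"
proof -
  define c where "c = 2 * real K + 1"
  have c0: "c > 0" unfolding c_def by simp
  define A where "A = (\<lambda>(i,j). (if i = j then 1 else 0) - M (i,j) / c)"
  interpret sqrt_I_minus K A "(2 * real K - 1) / c"
  proof
    show "row_sum_le K A ((2 * real K - 1) / c)"
      unfolding A_def c_def by (rule DK_shift_row_sum_le[OF M])
    show "0 \<le> (2 * real K - 1) / c" "(2 * real K - 1) / c < 1" using K c0 by (simp_all add: c_def)
    show "A (i,j) = A (j,i)" if "i < K" "j < K" for i j
      using M that unfolding A_def DK_def symmetric_mat_def by auto
  qed
  define R where "R = (\<lambda>ij. sqrt (s * c) * sqrt_mat ij)"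
  have "sqmat K R" using sqmat_sqrt_mat unfolding sqmat_def R_def by simp
  moreover have "posdef_mat K R"
    unfolding R_def using s c0 by (intro posdef_mat_scale posdef_sqrt_mat) simp
  moreover have "(\<Sum>l<K. R (i,l) * R (l,j)) = s * M (i,j)" if ij: "i < K" "j < K" for i j
  proof -
    have "(\<Sum>l<K. R (i,l) * R (l,j))
        = (\<Sum>l<K. (sqrt (s * c) * sqrt (s * c)) * (sqrt_mat (i,l) * sqrt_mat (l,j)))"
      unfolding R_def by (simp only: mult_ac)
    also have "\<dots> = (s * c) * (\<Sum>l<K. sqrt_mat (i,l) * sqrt_mat (l,j))"
      using s c0 by (simp add: sum_distrib_left)
    also have "\<dots> = s * M (i,j)" using sqrt_mat_square[OF ij] c0 by (simp add: A_def field_simps)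
    finally show ?thesis .
  qed
  ultimately show ?thesis by blast
qed

lemma posdef_mat_nonneg: "posdef_mat K R \<Longrightarrow> 0 \<le> (\<Sum>i<K. \<Sum>j<K. v i * R (i,j) * v j)"
  unfolding posdef_mat_def by (cases "\<exists>i<K. v i \<noteq> 0") (auto intro: less_imp_le)

text \<open>For \<open>D = R\<^sub>1 - R\<^sub>2\<close> this is \<open>tr (D\<^sup>T R\<^sub>1 D) + tr (D R\<^sub>2 D\<^sup>T) = tr (D\<^sup>T (R\<^sub>1 D + D R\<^sub>2))\<close>.\<close>
lemma trace_quadratic_forms_eq:
  fixes R1 R2 D :: "nat \<times> nat \<Rightarrow> real"
  shows "(\<Sum>j<K. \<Sum>i<K. \<Sum>l<K. D (i,j) * R1 (i,l) * D (l,j))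
      + (\<Sum>i<K. \<Sum>l<K. \<Sum>j<K. D (i,l) * R2 (l,j) * D (i,j))
    = (\<Sum>j<K. \<Sum>i<K. D (i,j) * ((\<Sum>l<K. R1 (i,l) * D (l,j)) + (\<Sum>l<K. D (i,l) * R2 (l,j))))"
proof -
  have "(\<Sum>i<K. \<Sum>l<K. \<Sum>j<K. D (i,l) * R2 (l,j) * D (i,j))
      = (\<Sum>i<K. \<Sum>j<K. \<Sum>l<K. D (i,l) * R2 (l,j) * D (i,j))"
    by (rule sum.cong[OF refl]) (rule sum.swap)
  also have "\<dots> = (\<Sum>i<K. \<Sum>j<K. \<Sum>l<K. D (i,j) * D (i,l) * R2 (l,j))"
    by (intro sum.cong refl) (simp add: mult_ac)
  also have "\<dots> = (\<Sum>j<K. \<Sum>i<K. \<Sum>l<K. D (i,j) * D (i,l) * R2 (l,j))" by (rule sum.swap)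
  finally show ?thesis
    by (simp add: sum.distrib[symmetric] sum_distrib_left distrib_left mult.assoc)
qed

lemma posdef_mat_form_eq_0:
  assumes "posdef_mat K R" "(\<Sum>i<K. \<Sum>j<K. v i * R (i,j) * v j) = 0" "i < K"
  shows "v i = 0"
  using assms unfolding posdef_mat_def by force

lemma posdef_sqrt_unique:
  assumes R1: "sqmat K R1" "posdef_mat K R1" and R2: "sqmat K R2" "posdef_mat K R2"
    and eq: "\<forall>i<K. \<forall>j<K. (\<Sum>l<K. R1 (i,l) * R1 (l,j)) = (\<Sum>l<K. R2 (i,l) * R2 (l,j))"
  shows "R1 = R2"
proof -
  define D where "D = (\<lambda>ij. R1 ij - R2 ij)"
  have cross: "(\<Sum>l<K. R1 (i,l) * D (l,j)) + (\<Sum>l<K. D (i,l) * R2 (l,j)) = 0"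
    if "i < K" "j < K" for i j
  proof -
    have "(\<Sum>l<K. R1 (i,l) * D (l,j)) + (\<Sum>l<K. D (i,l) * R2 (l,j))
        = (\<Sum>l<K. R1 (i,l) * R1 (l,j)) - (\<Sum>l<K. R2 (i,l) * R2 (l,j))"
      unfolding D_def sum_subtractf[symmetric] sum.distrib[symmetric]
      by (intro sum.cong refl) (simp add: algebra_simps)
    then show ?thesis using eq that by simp
  qed
  have n1: "0 \<le> (\<Sum>i<K. \<Sum>l<K. D (i,j) * R1 (i,l) * D (l,j))" for j
    using posdef_mat_nonneg[OF R1(2), of "\<lambda>i. D (i,j)"] by simp
  have n2: "0 \<le> (\<Sum>l<K. \<Sum>j<K. D (i,l) * R2 (l,j) * D (i,j))" for i
    using posdef_mat_nonneg[OF R2(2), of "\<lambda>l. D (i,l)"] by simp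
  have "(\<Sum>j<K. \<Sum>i<K. \<Sum>l<K. D (i,j) * R1 (i,l) * D (l,j))
      + (\<Sum>i<K. \<Sum>l<K. \<Sum>j<K. D (i,l) * R2 (l,j) * D (i,j)) = 0"
    unfolding trace_quadratic_forms_eq using cross by simp
  moreover have "0 \<le> (\<Sum>j<K. \<Sum>i<K. \<Sum>l<K. D (i,j) * R1 (i,l) * D (l,j))"
    and "0 \<le> (\<Sum>i<K. \<Sum>l<K. \<Sum>j<K. D (i,l) * R2 (l,j) * D (i,j))"
    by (rule sum_nonneg, rule n1) (rule sum_nonneg, rule n2)
  ultimately have "(\<Sum>j<K. \<Sum>i<K. \<Sum>l<K. D (i,j) * R1 (i,l) * D (l,j)) = 0" by linarith
  then have col: "(\<Sum>i<K. \<Sum>l<K. D (i,j) * R1 (i,l) * D (l,j)) = 0" if "j < K" for j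
    using sum_nonneg_eq_0_iff[of "{..<K}", OF _ n1] that by auto
  have "R1 (i,j) = R2 (i,j)" for i j
  proof (cases "i < K \<and> j < K")
    case True
    then show ?thesis
      using posdef_mat_form_eq_0[OF R1(2), of "\<lambda>i. D (i,j)" i] col[of j] by (simp add: D_def)
  next
    case False
    then show ?thesis using R1(1) R2(1) unfolding sqmat_def by auto
  qed
  then show ?thesis by auto
qed

lemma sqrtm_DnK:
  assumes K: "K \<ge> 1" and L: "L \<in> DnK s K" and s: "0 < s"
  shows "sqmat K (sqrtm K L)" "posdef_mat K (sqrtm K L)"
    "\<And>i j. i < K \<Longrightarrow> j < K \<Longrightarrow> (\<Sum>l<K. sqrtm K L (i,l) * sqrtm K L (l,j)) = L (i,j)"
proof -
  obtain M where M: "M \<in> DK K" and LM: "L = (\<lambda>ij. s * M ij)" using L unfolding DnK_def by blast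
  obtain R where R: "sqmat K R \<and> posdef_mat K R \<and> (\<forall>i<K. \<forall>j<K. (\<Sum>l<K. R (i,l) * R (l,j)) = L (i,j))"
    using posdef_sqrt_DnK_exists[OF K M s] LM by auto
  have "\<exists>!R. sqmat K R \<and> posdef_mat K R \<and> (\<forall>i<K. \<forall>j<K. (\<Sum>l<K. R (i,l) * R (l,j)) = L (i,j))"
    using R by (intro ex1I[of _ R]) (auto intro: posdef_sqrt_unique)
  from theI'[OF this, folded sqrtm_def]
  show "sqmat K (sqrtm K L)" "posdef_mat K (sqrtm K L)"
    "\<And>i j. i < K \<Longrightarrow> j < K \<Longrightarrow> (\<Sum>l<K. sqrtm K L (i,l) * sqrtm K L (l,j)) = L (i,j)"
    by auto
qed

lemma abs_sqrtm_DnK_le: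
  assumes K: "K \<ge> 1" and L: "L \<in> DnK s K" and s: "0 < s"
  shows "\<bar>sqrtm K L (i,j)\<bar> \<le> sqrt (s * (2 * real K + 1))"
proof (cases "i < K \<and> j < K")
  case False
  then have "sqrtm K L (i,j) = 0" using sqrtm_DnK(1)[OF K L s] unfolding sqmat_def by auto
  then show ?thesis using s by simp
next
  case True
  let ?R = "sqrtm K L"
  have sym: "\<And>a b. a < K \<Longrightarrow> b < K \<Longrightarrow> ?R (a,b) = ?R (b,a)"
    using sqrtm_DnK(2)[OF K L s] unfolding posdef_mat_def symmetric_mat_def by auto
  have "(?R (i,j))^2 \<le> (\<Sum>l<K. (?R (l,j))^2)"
    using True by (intro member_le_sum) auto
  also have "\<dots> = (\<Sum>l<K. ?R (j,l) * ?R (l,j))"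
    using True sym by (intro sum.cong refl) (auto simp: power2_eq_square)
  also have "\<dots> = L (j,j)" using sqrtm_DnK(3)[OF K L s] True by auto
  also have "\<dots> \<le> s * (2 * real K + 1)"
    using L True s unfolding DnK_def DK_def by (auto intro: less_imp_le)
  finally show ?thesis by (simp add: real_le_rsqrt)
qed

lemma measurable_mmul[measurable]: "(\<lambda>x. mmul K x R ik) \<in> borel_measurable (Mat n K')"
  unfolding mmul_def by (cases ik) simp

lemma abs_mmul_le:
  assumes x: "\<forall>ik\<in>idx n K. \<bar>x ik\<bar> \<le> S" and R: "\<And>i j. \<bar>R (i,j)\<bar> \<le> \<rho>"
    and ik: "ik \<in> idx n K" and S: "0 \<le> S"
  shows "\<bar>mmul K x R ik\<bar> \<le> real K * S * \<rho>"
proof -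
  obtain i k where ik': "ik = (i,k)" by force
  have i: "i < n" using ik ik' by (simp add: idx_def)
  have "\<bar>mmul K x R ik\<bar> \<le> (\<Sum>l<K. \<bar>x (i,l)\<bar> * \<bar>R (l,k)\<bar>)"
    unfolding ik' mmul_def by (simp add: order.trans[OF sum_abs] abs_mult)
  also have "\<dots> \<le> (\<Sum>l<K. S * \<rho>)"
    using x i R S by (intro sum_mono mult_mono) (auto simp: idx_def)
  finally show ?thesis by simp
qed

lemma neg_Ham_shift:
  "- Ham n K L x (\<lambda>ik. V ik + Z ik) =
     (- (1/2) * (\<Sum>ik\<in>idx n K. (mmul K x (sqrtm K L) ik)^2)
      + (\<Sum>ik\<in>idx n K. V ik * mmul K x (sqrtm K L) ik))
     + (\<Sum>ik\<in>idx n K. Z ik * mmul K x (sqrtm K L) ik)"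
  unfolding Ham_def Let_def by (simp add: distrib_right sum.distrib)

lemma measurable_Ham[measurable]: "(\<lambda>x. Ham n K L x Y) \<in> borel_measurable (Mat n K')"
  unfolding Ham_def Let_def by measurable

text \<open>Everything but the Gaussian noise \<open>Z\<close> is fixed: \<open>P\<close> is the prior of the signal, \<open>p x\<close> the
  likelihood of the observation, \<open>X\<close> the true signal, and \<open>\<rho>\<close> bounds the entries of \<open>\<lambda>\<^sup>1\<^sup>/\<^sup>2\<close>.
  \<open>gap Z\<close> is the perturbed minus the base free-energy integrand.\<close>
locale gibbs_gap =
  fixes n K :: nat and S \<rho> :: real and L :: "nat \<times> nat \<Rightarrow> real"
    and P :: "(nat \<times> nat \<Rightarrow> real) measure" and p :: "(nat \<times> nat \<Rightarrow> real) \<Rightarrow> real"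
    and X :: "nat \<times> nat \<Rightarrow> real"
  assumes n: "n \<ge> 1" and S: "0 \<le> S" and \<rho>: "0 \<le> \<rho>"
    and Rb: "\<And>i j. \<bar>sqrtm K L (i,j)\<bar> \<le> \<rho>"
    and P: "prob_space P" and sP: "sets P = sets (Mat n K)"
    and Pb: "AE x in P. \<forall>ik\<in>idx n K. \<bar>x ik\<bar> \<le> S"
    and pm[measurable]: "p \<in> borel_measurable (Mat n K)" and p0: "\<And>x. 0 \<le> p x"
    and Xb: "\<forall>ik\<in>idx n K. \<bar>X ik\<bar> \<le> S"
begin

interpretation P: prob_space P by (rule P)

abbreviation "R \<equiv> sqrtm K L"
definition "\<beta> = real K * S * \<rho>"
definition "xR x ik = mmul K x R ik" for x ik
definition "mean_part x =
  - (1/2) * (\<Sum>ik\<in>idx n K. (xR x ik)^2) + (\<Sum>ik\<in>idx n K. mmul K X R ik * xR x ik)" for x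
definition "b_max = 3/2 * real n * real K * \<beta>^2"
definition "noise_part Z x = (\<Sum>ik\<in>idx n K. Z ik * xR x ik)" for Z x
definition "Y Z = (\<lambda>ik. mmul K X R ik + Z ik)" for Z
definition "part_pert Z = (\<integral>x. p x * exp (- Ham n K L x (Y Z)) \<partial>P)" for Z
definition "part0 = (\<integral>x. p x \<partial>P)"
definition "gap Z = - (1 / real n) * ln (part_pert Z) - (- (1 / real n) * ln part0)" for Z
definition "in_box x \<longleftrightarrow> (\<forall>ik\<in>idx n K. \<bar>x ik\<bar> \<le> S)" for x
definition "expo_bound Z = b_max + \<beta> * (\<Sum>ik\<in>idx n K. \<bar>Z ik\<bar>)" for Z

lemma beta_nonneg: "0 \<le> \<beta>" using S \<rho> by (simp add: \<beta>_def)
lemma b_max_nonneg: "0 \<le> b_max" by (simp add: b_max_def)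
lemma expo_bound_nonneg: "0 \<le> expo_bound Z"
  using b_max_nonneg beta_nonneg by (simp add: expo_bound_def sum_nonneg)

lemma neg_Ham_eq: "- Ham n K L x (Y Z) = mean_part x + noise_part Z x"
  unfolding Y_def mean_part_def noise_part_def xR_def by (rule neg_Ham_shift)

lemma AE_in_box: "AE x in P. in_box x" using Pb by (simp add: in_box_def)

lemma abs_xR_le: assumes "in_box x" "ik \<in> idx n K" shows "\<bar>xR x ik\<bar> \<le> \<beta>"
  unfolding xR_def \<beta>_def
    by (rule abs_mmul_le[where \<rho>=\<rho>]) (use assms Rb S in \<open>auto simp: in_box_def\<close>)

lemma abs_XR_le: assumes "ik \<in> idx n K" shows "\<bar>mmul K X R ik\<bar> \<le> \<beta>"
  unfolding \<beta>_def by (rule abs_mmul_le[where \<rho>=\<rho>]) (use assms Rb S Xb in auto)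

lemma sum_xR_sq_le: assumes "in_box x" shows "(\<Sum>ik\<in>idx n K. (xR x ik)^2) \<le> real n * real K * \<beta>^2"
proof -
  have "(\<Sum>ik\<in>idx n K. (xR x ik)^2) \<le> (\<Sum>ik\<in>idx n K. \<beta>^2)"
  proof (intro sum_mono)
    fix ik assume "ik \<in> idx n K"
    then have "\<bar>xR x ik\<bar> \<le> \<beta>" using abs_xR_le assms by blast
    then show "(xR x ik)^2 \<le> \<beta>^2" by (metis abs_ge_zero power2_abs power_mono)
  qed
  also have "\<dots> = real n * real K * \<beta>^2" by (simp add: card_idx)
  finally show ?thesis .
qed

lemma abs_mean_part_le: assumes "in_box x" shows "\<bar>mean_part x\<bar> \<le> b_max"
proof -
  have s1: "0 \<le> (\<Sum>ik\<in>idx n K. (xR x ik)^2)" by (simp add: sum_nonneg)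
  have s2: "\<bar>\<Sum>ik\<in>idx n K. mmul K X R ik * xR x ik\<bar> \<le> real n * real K * \<beta>^2"
  proof -
    have "\<bar>\<Sum>ik\<in>idx n K. mmul K X R ik * xR x ik\<bar> \<le> (\<Sum>ik\<in>idx n K. \<beta> * \<beta>)"
      by (rule order.trans[OF sum_abs sum_mono])
         (use abs_xR_le[OF assms] abs_XR_le beta_nonneg in \<open>auto simp: abs_mult intro!: mult_mono\<close>)
    also have "\<dots> = real n * real K * \<beta>^2" by (simp add: card_idx power2_eq_square)
    finally show ?thesis .
  qed
  show ?thesis
    using s1 sum_xR_sq_le[OF assms] s2 unfolding mean_part_def b_max_def abs_le_iff by auto
qed

lemma abs_noise_part_le: assumes "in_box x" shows "\<bar>noise_part Z x\<bar> \<le> \<beta> * (\<Sum>ik\<in>idx n K. \<bar>Z ik\<bar>)"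
proof -
  have "\<bar>noise_part Z x\<bar> \<le> (\<Sum>ik\<in>idx n K. \<bar>Z ik\<bar> * \<beta>)"
    unfolding noise_part_def
    by (rule order.trans[OF sum_abs sum_mono])
      (use abs_xR_le[OF assms] in \<open>auto simp: abs_mult intro!: mult_left_mono\<close>)
  then show ?thesis by (simp add: sum_distrib_left mult.commute)
qed

lemma abs_exponent_le:
  assumes "in_box x"
  shows "\<bar>mean_part x + noise_part Z x\<bar> \<le> expo_bound Z"
  using abs_mean_part_le[OF assms] abs_noise_part_le[OF assms, of Z]
    abs_triangle_ineq[of "mean_part x" "noise_part Z x"]
  unfolding expo_bound_def by linarith

lemma measurable_p[measurable]: "p \<in> borel_measurable P"
  using pm by (simp add: measurable_cong_sets[OF sP refl])

lemma measurable_xR[measurable]: "(\<lambda>x. xR x ik) \<in> borel_measurable (Mat n K)"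
  unfolding xR_def by measurable
lemma measurable_mean_part[measurable]: "mean_part \<in> borel_measurable (Mat n K)"
  unfolding mean_part_def by measurable
lemma measurable_noise_part[measurable]: "noise_part Z \<in> borel_measurable (Mat n K)"
  unfolding noise_part_def by measurable

lemma measurable_P: "f \<in> borel_measurable (Mat n K) \<Longrightarrow> f \<in> borel_measurable P"
  by (simp add: measurable_cong_sets[OF sP refl])

lemma integrable_p_mult:
  assumes ip: "integrable P p" and fm: "f \<in> borel_measurable (Mat n K)"
    and fb: "\<And>x. in_box x \<Longrightarrow> \<bar>f x\<bar> \<le> c"
  shows "integrable P (\<lambda>x. p x * f x)"
proof (rule Bochner_Integration.integrable_bound[where f="\<lambda>x. \<bar>c\<bar> * p x"])
  show "integrable P (\<lambda>x. \<bar>c\<bar> * p x)" using ip by simp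
  show "(\<lambda>x. p x * f x) \<in> borel_measurable P" by (rule measurable_P) (use fm in measurable)
  show "AE x in P. norm (p x * f x) \<le> norm (\<bar>c\<bar> * p x)"
    using AE_in_box
  proof eventually_elim
    case (elim x)
    have "p x * \<bar>f x\<bar> \<le> p x * \<bar>c\<bar>" using fb[OF elim] p0[of x] by (intro mult_left_mono) auto
    then show ?case using p0[of x] by (simp add: abs_mult mult.commute)
  qed
qed

lemma integral_p_mono:
  assumes "integrable P (\<lambda>x. p x * f x)" "integrable P (\<lambda>x. p x * g x)"
    and "\<And>x. in_box x \<Longrightarrow> f x \<le> g x"
  shows "(\<integral>x. p x * f x \<partial>P) \<le> (\<integral>x. p x * g x \<partial>P)"
proof (rule integral_mono_AE[OF assms(1,2)])
  show "AE x in P. p x * f x \<le> p x * g x"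
    using AE_in_box by eventually_elim (use assms(3) p0 in \<open>simp add: mult_left_mono\<close>)
qed

lemma part_pert_eq: "part_pert Z = (\<integral>x. p x * exp (mean_part x + noise_part Z x) \<partial>P)"
  unfolding part_pert_def neg_Ham_eq ..

lemma measurable_pert_integrand:
  "(\<lambda>x. p x * exp (mean_part x + noise_part Z x)) \<in> borel_measurable P"
  by (rule measurable_P) measurable

lemma integrable_pert_integrand:
  assumes "integrable P p"
  shows "integrable P (\<lambda>x. p x * exp (mean_part x + noise_part Z x))"
proof (rule integrable_p_mult[OF assms])
  show "\<bar>exp (mean_part x + noise_part Z x)\<bar> \<le> exp (expo_bound Z)" if "in_box x" for x
    using abs_exponent_le[OF that, of Z] by simp
qed measurable

lemma integrable_of_pert_integrand:
  assumes "integrable P (\<lambda>x. p x * exp (mean_part x + noise_part Z x))"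
  shows "integrable P p"
proof (rule Bochner_Integration.integrable_bound[OF _ measurable_P[OF pm]])
  show "integrable P (\<lambda>x. exp (expo_bound Z) * (p x * exp (mean_part x + noise_part Z x)))"
    using assms by simp
  show "AE x in P. norm (p x)
      \<le> norm (exp (expo_bound Z) * (p x * exp (mean_part x + noise_part Z x)))"
    using AE_in_box
  proof eventually_elim
    case (elim x)
    have "- expo_bound Z \<le> mean_part x + noise_part Z x"
      using abs_exponent_le[OF elim, of Z] by simp
    then have "exp (- expo_bound Z) \<le> exp (mean_part x + noise_part Z x)" by simp
    then have "1 \<le> exp (expo_bound Z) * exp (mean_part x + noise_part Z x)"
      by (simp add: exp_minus field_simps)
    then have "p x * 1 \<le> p x * (exp (expo_bound Z) * exp (mean_part x + noise_part Z x))"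
      using p0[of x] by (intro mult_left_mono) auto
    then show ?case using p0[of x] by (simp add: abs_mult mult_ac)
  qed
qed

lemma part0_nonneg: "0 \<le> part0" unfolding part0_def using p0 by simp

lemma gap_degenerate: assumes "\<not> (integrable P p \<and> part0 > 0)" shows "gap Z = 0"
proof (cases "integrable P p")
  case False
  then have "part0 = 0" unfolding part0_def by (rule not_integrable_integral_eq)
  moreover have "part_pert Z = 0" unfolding part_pert_eq
    using integrable_of_pert_integrand False by (metis not_integrable_integral_eq)
  ultimately show ?thesis by (simp add: gap_def)
next
  case True
  then have "part0 = 0" using assms part0_nonneg by simp
  then have ae0: "AE x in P. p x = 0" using True p0 unfolding part0_def
    by (subst (asm) integral_nonneg_eq_0_iff_AE) auto
  have "part_pert Z = (\<integral>x. 0 \<partial>P)" unfolding part_pert_eq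
    by (rule integral_cong_AE) (use ae0 measurable_pert_integrand in \<open>auto elim!: eventually_mono\<close>)
  then have "part_pert Z = 0" by simp
  then show ?thesis using \<open>part0 = 0\<close> by (simp add: gap_def)
qed

lemma part_pert_bounds:
  assumes ip: "integrable P p"
  shows "part0 * exp (- expo_bound Z) \<le> part_pert Z" "part_pert Z \<le> part0 * exp (expo_bound Z)"
proof -
  have "part0 * exp (- expo_bound Z) = (\<integral>x. p x * exp (- expo_bound Z) \<partial>P)"
    unfolding part0_def by simp
  also have "\<dots> \<le> part_pert Z" unfolding part_pert_eq
  proof (rule integral_p_mono[OF _ integrable_pert_integrand[OF ip]])
    show "exp (- expo_bound Z) \<le> exp (mean_part x + noise_part Z x)" if "in_box x" for x
      using abs_exponent_le[OF that, of Z] by simp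
  qed (use ip in simp)
  finally show "part0 * exp (- expo_bound Z) \<le> part_pert Z" .
  have "part_pert Z \<le> (\<integral>x. p x * exp (expo_bound Z) \<partial>P)" unfolding part_pert_eq
  proof (rule integral_p_mono[OF integrable_pert_integrand[OF ip]])
    show "exp (mean_part x + noise_part Z x) \<le> exp (expo_bound Z)" if "in_box x" for x
      using abs_exponent_le[OF that, of Z] by simp
  qed (use ip in simp)
  also have "\<dots> = part0 * exp (expo_bound Z)" unfolding part0_def by simp
  finally show "part_pert Z \<le> part0 * exp (expo_bound Z)" .
qed

lemma part_pert_pos: "integrable P p \<Longrightarrow> 0 < part0 \<Longrightarrow> 0 < part_pert Z"
  using part_pert_bounds(1)[of Z] by (smt (verit) exp_gt_zero mult_pos_pos)

lemma gap_eq: "gap Z = (ln part0 - ln (part_pert Z)) / real n"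
  unfolding gap_def by (simp add: diff_divide_distrib)

lemma abs_gap_le: "\<bar>gap Z\<bar> \<le> expo_bound Z / real n"
proof (cases "integrable P p \<and> part0 > 0")
  case False
  then show ?thesis using gap_degenerate expo_bound_nonneg by simp
next
  case True
  then have ip: "integrable P p" and A: "part0 > 0" by auto
  have "ln part0 - expo_bound Z = ln (part0 * exp (- expo_bound Z))" using A by (simp add: ln_mult)
  also have "\<dots> \<le> ln (part_pert Z)"
    using part_pert_bounds(1)[OF ip, of Z] part_pert_pos[OF ip A] A by (subst ln_le_cancel_iff) auto
  finally have lower: "ln part0 - expo_bound Z \<le> ln (part_pert Z)" .
  have "ln (part_pert Z) \<le> ln (part0 * exp (expo_bound Z))"
    using part_pert_bounds(2)[OF ip, of Z] part_pert_pos[OF ip A] A by (subst ln_le_cancel_iff) auto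
  also have "\<dots> = ln part0 + expo_bound Z" using A by (simp add: ln_mult)
  finally have "\<bar>ln part0 - ln (part_pert Z)\<bar> \<le> expo_bound Z" using lower by (simp add: abs_le_iff)
  then show ?thesis unfolding gap_eq using n by (simp add: divide_right_mono)
qed

abbreviation "E \<equiv> Gauss n K"

lemma measurable_pert_integrand2:
  "(\<lambda>(Z, x). p x * exp (mean_part x + noise_part Z x)) \<in> borel_measurable (E \<Otimes>\<^sub>M P)"
proof -
  have "(\<lambda>(Z, x). p x * exp (mean_part x + noise_part Z x)) \<in> borel_measurable (Mat n K \<Otimes>\<^sub>M Mat n K)"
    unfolding noise_part_def by measurable
  then show ?thesis
    by (simp add: measurable_cong_sets[OF sets_pair_measure_cong[OF sets_Gauss sP] refl])
qed

lemma measurable_noise_integrand: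
  "(\<lambda>(Z, x). p x * exp (noise_part Z x)) \<in> borel_measurable (E \<Otimes>\<^sub>M P)"
proof -
  have "(\<lambda>(Z, x). p x * exp (noise_part Z x)) \<in> borel_measurable (Mat n K \<Otimes>\<^sub>M Mat n K)"
    unfolding noise_part_def by measurable
  then show ?thesis
    by (simp add: measurable_cong_sets[OF sets_pair_measure_cong[OF sets_Gauss sP] refl])
qed

lemma measurable_part_pert: "part_pert \<in> borel_measurable E"
proof -
  have "(\<lambda>Z. \<integral>x. p x * exp (mean_part x + noise_part Z x) \<partial>P) \<in> borel_measurable E"
    using measurable_pert_integrand2 by (intro P.borel_measurable_lebesgue_integral) simp
  then show ?thesis by (simp add: part_pert_eq[abs_def])
qed

lemma measurable_gap: "gap \<in> borel_measurable E"
  unfolding gap_def[abs_def] using measurable_part_pert by measurable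

interpretation E: prob_space E by (rule prob_space_Gauss)

lemma integrable_abs_noise: "integrable E (\<lambda>Z. \<Sum>ik\<in>idx n K. \<bar>Z ik\<bar>)"
  using Gauss_coordinate_moments(3) by (intro Bochner_Integration.integrable_sum) auto

lemma integral_abs_noise_le: "(\<integral>Z. (\<Sum>ik\<in>idx n K. \<bar>Z ik\<bar>) \<partial>E) \<le> real n * real K"
proof -
  have "(\<integral>Z. (\<Sum>ik\<in>idx n K. \<bar>Z ik\<bar>) \<partial>E) = (\<Sum>ik\<in>idx n K. \<integral>Z. \<bar>Z ik\<bar> \<partial>E)"
    using Gauss_coordinate_moments(3) by (intro Bochner_Integration.integral_sum) auto
  also have "\<dots> \<le> (\<Sum>ik\<in>idx n K. 1)" using Gauss_coordinate_moments(4) by (intro sum_mono) auto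
  finally show ?thesis by (simp add: card_idx)
qed

lemma integrable_expo_bound: "integrable E (\<lambda>Z. expo_bound Z / real n)"
  unfolding expo_bound_def
    using integrable_abs_noise prob_space_Gauss by (intro integrable_divide integrable_add) auto

lemma integrable_gap: "integrable E gap"
  by (rule Bochner_Integration.integrable_bound[OF integrable_expo_bound measurable_gap])
     (use abs_gap_le expo_bound_nonneg n in \<open>auto intro!: AE_I2 simp: abs_of_nonneg\<close>)

lemma nn_integral_abs_gap_le:
  "(\<integral>\<^sup>+Z. ennreal \<bar>gap Z\<bar> \<partial>E) \<le> ennreal ((b_max + \<beta> * (real n * real K)) / real n)"
proof -
  have "(\<integral>\<^sup>+Z. ennreal \<bar>gap Z\<bar> \<partial>E) \<le> (\<integral>\<^sup>+Z. ennreal (expo_bound Z / real n) \<partial>E)"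
    by (intro nn_integral_mono ennreal_leI abs_gap_le)
  also have "\<dots> = ennreal (\<integral>Z. expo_bound Z / real n \<partial>E)"
    using integrable_expo_bound expo_bound_nonneg n by (intro nn_integral_eq_integral) auto
  also have "\<dots> \<le> ennreal ((b_max + \<beta> * (real n * real K)) / real n)"
  proof (intro ennreal_leI)
    have "(\<integral>Z. expo_bound Z / real n \<partial>E) = (b_max + \<beta> * (\<integral>Z. (\<Sum>ik\<in>idx n K. \<bar>Z ik\<bar>) \<partial>E)) / real n"
      unfolding expo_bound_def using integrable_abs_noise by (simp add: E.prob_space)
    also have "\<dots> \<le> (b_max + \<beta> * (real n * real K)) / real n"
      using integral_abs_noise_le beta_nonneg n
        by (intro divide_right_mono add_left_mono mult_left_mono) auto
    finally show "(\<integral>Z. expo_bound Z / real n \<partial>E) \<le> (b_max + \<beta> * (real n * real K)) / real n" .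
  qed
  finally show ?thesis .
qed

definition "post_mean ik = (\<integral>x. p x * xR x ik \<partial>P) / part0" for ik

lemma integrable_p_xR: "integrable P p \<Longrightarrow> ik \<in> idx n K \<Longrightarrow> integrable P (\<lambda>x. p x * xR x ik)"
  by (rule integrable_p_mult[where c=\<beta>]) (auto intro: abs_xR_le)

lemma integrable_p_mean_part: "integrable P p \<Longrightarrow> integrable P (\<lambda>x. p x * mean_part x)"
  by (rule integrable_p_mult[where c=b_max]) (auto intro: abs_mean_part_le)

lemma integrable_p_exponent:
  "integrable P p \<Longrightarrow> integrable P (\<lambda>x. p x * (mean_part x + noise_part Z x))"
  by (rule integrable_p_mult[where c="expo_bound Z"]) (auto intro: abs_exponent_le)

lemma integral_p_exponent: assumes ip: "integrable P p"
  shows "(\<integral>x. p x * (mean_part x + noise_part Z x) \<partial>P)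
      = (\<integral>x. p x * mean_part x \<partial>P) + (\<Sum>ik\<in>idx n K. Z ik * (\<integral>x. p x * xR x ik \<partial>P))"
proof -
  have "(\<integral>x. p x * (mean_part x + noise_part Z x) \<partial>P)
      = (\<integral>x. p x * mean_part x + (\<Sum>ik\<in>idx n K. Z ik * (p x * xR x ik)) \<partial>P)"
    unfolding noise_part_def by (simp add: distrib_left sum_distrib_left mult_ac)
  also have "\<dots> = (\<integral>x. p x * mean_part x \<partial>P) + (\<integral>x. (\<Sum>ik\<in>idx n K. Z ik * (p x * xR x ik)) \<partial>P)"
    using integrable_p_mean_part[OF ip] integrable_p_xR[OF ip]
    by (intro Bochner_Integration.integral_add Bochner_Integration.integrable_sum integrable_mult_right) auto
  also have "(\<integral>x. (\<Sum>ik\<in>idx n K. Z ik * (p x * xR x ik)) \<partial>P)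
      = (\<Sum>ik\<in>idx n K. Z ik * (\<integral>x. p x * xR x ik \<partial>P))"
    using integrable_p_xR[OF ip] by (subst Bochner_Integration.integral_sum) auto
  finally show ?thesis .
qed

lemma part_pert_ge_jensen: assumes ip: "integrable P p" and A: "part0 > 0"
  shows "part0 * exp ((\<integral>x. p x * (mean_part x + noise_part Z x) \<partial>P) / part0) \<le> part_pert Z"
proof -
  define c where "c = (\<integral>x. p x * (mean_part x + noise_part Z x) \<partial>P) / part0"
  have pw: "exp c * (p x + p x * (mean_part x + noise_part Z x) - c * p x)
      \<le> p x * exp (mean_part x + noise_part Z x)" for x
  proof -
    have "1 + (mean_part x + noise_part Z x - c) \<le> exp (mean_part x + noise_part Z x - c)"
      by (rule exp_ge_add_one_self)
    then have "exp c * (1 + (mean_part x + noise_part Z x - c))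
        \<le> exp c * exp (mean_part x + noise_part Z x - c)" by simp
    also have "\<dots> = exp (mean_part x + noise_part Z x)" by (simp add: exp_diff)
    finally have "p x * (exp c * (1 + (mean_part x + noise_part Z x - c)))
        \<le> p x * exp (mean_part x + noise_part Z x)"
      using p0[of x] by (intro mult_left_mono) auto
    then show ?thesis by (simp add: algebra_simps)
  qed
  have "(\<integral>x. exp c * (p x + p x * (mean_part x + noise_part Z x) - c * p x) \<partial>P)
      = exp c * (part0 + (\<integral>x. p x * (mean_part x + noise_part Z x) \<partial>P) - c * part0)"
    unfolding part0_def using ip integrable_p_exponent[OF ip, of Z] by simp
  also have "\<dots> = exp c * part0" using A by (simp add: c_def)
  finally have e: "(\<integral>x. exp c * (p x + p x * (mean_part x + noise_part Z x) - c * p x) \<partial>P)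
      = part0 * exp c" by simp
  have "(\<integral>x. exp c * (p x + p x * (mean_part x + noise_part Z x) - c * p x) \<partial>P) \<le> part_pert Z"
    unfolding part_pert_eq
    by (rule integral_mono[OF _ integrable_pert_integrand[OF ip] pw])
      (use ip integrable_p_exponent[OF ip, of Z] in simp)
  then have "part0 * exp c \<le> part_pert Z" by (simp only: e)
  then show ?thesis unfolding c_def .
qed

lemma gap_le_linear:
  assumes ip: "integrable P p" and A: "part0 > 0"
  shows "gap Z \<le> (b_max - (\<Sum>ik\<in>idx n K. Z ik * post_mean ik)) / real n"
proof -
  define c where "c = (\<integral>x. p x * (mean_part x + noise_part Z x) \<partial>P) / part0"
  have "ln part0 + c = ln (part0 * exp c)" using A by (simp add: ln_mult)
  also have "\<dots> \<le> ln (part_pert Z)"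
    using part_pert_ge_jensen[OF ip A, of Z] part_pert_pos[OF ip A] A
    by (subst ln_le_cancel_iff) (auto simp: c_def)
  finally have lower: "ln part0 + c \<le> ln (part_pert Z)" .
  have "- b_max * part0 = (\<integral>x. p x * (- b_max) \<partial>P)" unfolding part0_def by (simp add: mult.commute)
  also have "\<dots> \<le> (\<integral>x. p x * mean_part x \<partial>P)"
  proof (rule integral_p_mono[OF _ integrable_p_mean_part[OF ip]])
    show "- b_max \<le> mean_part x" if "in_box x" for x
      using abs_mean_part_le[OF that] by (simp add: abs_le_iff)
  qed (use ip in simp)
  finally have "- b_max \<le> (\<integral>x. p x * mean_part x \<partial>P) / part0" using A by (simp add: field_simps)
  moreover have "c = (\<integral>x. p x * mean_part x \<partial>P) / part0 + (\<Sum>ik\<in>idx n K. Z ik * post_mean ik)"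
    unfolding c_def integral_p_exponent[OF ip] post_mean_def add_divide_distrib sum_divide_distrib
    by simp
  ultimately have "ln part0 - ln (part_pert Z) \<le> b_max - (\<Sum>ik\<in>idx n K. Z ik * post_mean ik)"
    using lower by linarith
  then show ?thesis unfolding gap_eq by (rule divide_right_mono) simp
qed

lemma integral_gap_le: "(\<integral>Z. gap Z \<partial>E) \<le> b_max / real n"
proof (cases "integrable P p \<and> part0 > 0")
  case False
  then show ?thesis using gap_degenerate b_max_nonneg n by simp
next
  case True
  have iZ: "integrable E (\<lambda>Z. (b_max - (\<Sum>ik\<in>idx n K. Z ik * post_mean ik)) / real n)"
    using Gauss_coordinate_moments(1)
      by (intro integrable_divide Bochner_Integration.integrable_diff
        Bochner_Integration.integrable_sum integrable_mult_left) auto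
  have "(\<integral>Z. gap Z \<partial>E) \<le> (\<integral>Z. (b_max - (\<Sum>ik\<in>idx n K. Z ik * post_mean ik)) / real n \<partial>E)"
    using True by (intro integral_mono[OF integrable_gap iZ] gap_le_linear) auto
  also have "\<dots> = (b_max - (\<Sum>ik\<in>idx n K. (\<integral>Z. Z ik \<partial>E) * post_mean ik)) / real n"
    using Gauss_coordinate_moments(1)
      by (simp add: Bochner_Integration.integral_sum Bochner_Integration.integrable_sum E.prob_space)
  also have "\<dots> = b_max / real n" using Gauss_coordinate_moments(2) by simp
  finally show ?thesis .
qed

definition "part_noise Z = (\<integral>x. p x * exp (noise_part Z x) \<partial>P)" for Z
definition "part_tilt = (\<integral>x. p x * exp ((\<Sum>ik\<in>idx n K. (xR x ik)^2) / 2) \<partial>P)"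

lemma noise_part_le: "in_box x \<Longrightarrow> noise_part Z x \<le> \<beta> * (\<Sum>ik\<in>idx n K. \<bar>Z ik\<bar>)"
  using abs_noise_part_le[of x Z] by (simp add: abs_le_iff)
lemma noise_part_ge: "in_box x \<Longrightarrow> - (\<beta> * (\<Sum>ik\<in>idx n K. \<bar>Z ik\<bar>)) \<le> noise_part Z x"
  using abs_noise_part_le[of x Z] by (simp add: abs_le_iff)

lemma integrable_p_exp_noise: "integrable P p \<Longrightarrow> integrable P (\<lambda>x. p x * exp (noise_part Z x))"
  by (rule integrable_p_mult[where c="exp (\<beta> * (\<Sum>ik\<in>idx n K. \<bar>Z ik\<bar>))"]) (auto simp: noise_part_le)

lemma integrable_p_exp_tilt:
  "integrable P p \<Longrightarrow> integrable P (\<lambda>x. p x * exp ((\<Sum>ik\<in>idx n K. (xR x ik)^2) / 2))"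
  by (rule integrable_p_mult[where c="exp (real n * real K * \<beta>^2 / 2)"]) (auto simp: sum_xR_sq_le)

lemma part_noise_pos:
  assumes ip: "integrable P p" and A: "part0 > 0"
  shows "0 < part_noise Z"
proof -
  have "0 < part0 * exp (- (\<beta> * (\<Sum>ik\<in>idx n K. \<bar>Z ik\<bar>)))" using A by simp
  also have "\<dots> = (\<integral>x. p x * exp (- (\<beta> * (\<Sum>ik\<in>idx n K. \<bar>Z ik\<bar>))) \<partial>P)"
    unfolding part0_def by simp
  also have "\<dots> \<le> part_noise Z" unfolding part_noise_def
  proof (rule integral_p_mono[OF _ integrable_p_exp_noise[OF ip]])
    show "exp (- (\<beta> * (\<Sum>ik\<in>idx n K. \<bar>Z ik\<bar>))) \<le> exp (noise_part Z x)" if "in_box x" for x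
      using noise_part_ge[OF that, of Z] by simp
  qed (use ip in simp)
  finally show ?thesis .
qed

lemma part_pert_le_part_noise:
  assumes ip: "integrable P p"
  shows "part_pert Z \<le> exp b_max * part_noise Z"
proof -
  have "part_pert Z \<le> (\<integral>x. p x * (exp b_max * exp (noise_part Z x)) \<partial>P)" unfolding part_pert_eq
  proof (rule integral_p_mono[OF integrable_pert_integrand[OF ip]])
    show "exp (mean_part x + noise_part Z x) \<le> exp b_max * exp (noise_part Z x)" if "in_box x" for x
      using abs_mean_part_le[OF that] by (simp add: exp_add[symmetric] abs_le_iff)
    show "integrable P (\<lambda>x. p x * (exp b_max * exp (noise_part Z x)))"
      using integrable_mult_left[OF integrable_p_exp_noise[OF ip], where c="exp b_max"]
        by (simp add: mult_ac)
  qed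
  also have "\<dots> = exp b_max * part_noise Z"
    unfolding part_noise_def by (simp add: mult.left_commute[of "p _"])
  finally show ?thesis .
qed

lemma measurable_part_noise: "part_noise \<in> borel_measurable E"
proof -
  have "(\<lambda>Z. \<integral>x. p x * exp (noise_part Z x) \<partial>P) \<in> borel_measurable E"
    using measurable_noise_integrand by (intro P.borel_measurable_lebesgue_integral) simp
  then show ?thesis by (simp add: part_noise_def[abs_def])
qed

lemma nn_integral_part_noise:
  assumes ip: "integrable P p"
  shows "(\<integral>\<^sup>+Z. ennreal (part_noise Z) \<partial>E) = ennreal part_tilt"
proof -
  interpret EP: pair_sigma_finite E P
    by (simp add: pair_sigma_finite_def prob_space_imp_sigma_finite prob_space_Gauss P)
  have "(\<integral>\<^sup>+Z. ennreal (part_noise Z) \<partial>E)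
      = (\<integral>\<^sup>+Z. (\<integral>\<^sup>+x. ennreal (p x * exp (noise_part Z x)) \<partial>P) \<partial>E)"
    unfolding part_noise_def using integrable_p_exp_noise[OF ip] p0
    by (intro nn_integral_cong nn_integral_eq_integral[symmetric]) auto
  also have "\<dots> = (\<integral>\<^sup>+x. (\<integral>\<^sup>+Z. ennreal (p x * exp (noise_part Z x)) \<partial>E) \<partial>P)"
  proof (rule EP.Fubini'[symmetric])
    show "(\<lambda>(Z, x). ennreal (p x * exp (noise_part Z x))) \<in> borel_measurable (E \<Otimes>\<^sub>M P)"
      using measurable_compose[OF measurable_noise_integrand measurable_ennreal]
        by (simp add: case_prod_unfold)
  qed
  also have "\<dots> = (\<integral>\<^sup>+x. ennreal (p x * exp ((\<Sum>ik\<in>idx n K. (xR x ik)^2) / 2)) \<partial>P)"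
  proof (intro nn_integral_cong)
    fix x
    have "(\<integral>\<^sup>+Z. ennreal (p x * exp (noise_part Z x)) \<partial>E)
        = (\<integral>\<^sup>+Z. ennreal (p x) * ennreal (exp (\<Sum>ik\<in>idx n K. xR x ik * Z ik)) \<partial>E)"
      using p0[of x]
        by (intro nn_integral_cong) (simp add: ennreal_mult noise_part_def mult.commute)
    also have "\<dots> = ennreal (p x) * (\<integral>\<^sup>+Z. ennreal (exp (\<Sum>ik\<in>idx n K. xR x ik * Z ik)) \<partial>E)"
    proof (rule nn_integral_cmult)
      have "(\<lambda>Z. exp (\<Sum>ik\<in>idx n K. xR x ik * Z ik)) \<in> borel_measurable (Mat n K)" by measurable
      then show "(\<lambda>Z. ennreal (exp (\<Sum>ik\<in>idx n K. xR x ik * Z ik))) \<in> borel_measurable E"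
        by (simp add: measurable_cong_sets[OF sets_Gauss refl])
    qed
    also have "\<dots> = ennreal (p x) * ennreal (exp (\<Sum>ik\<in>idx n K. (xR x ik)^2 / 2))"
      by (simp only: nn_integral_exp_Gauss)
    also have "\<dots> = ennreal (p x * exp ((\<Sum>ik\<in>idx n K. (xR x ik)^2) / 2))"
      using p0[of x] by (simp add: ennreal_mult sum_divide_distrib)
    finally show "(\<integral>\<^sup>+Z. ennreal (p x * exp (noise_part Z x)) \<partial>E)
        = ennreal (p x * exp ((\<Sum>ik\<in>idx n K. (xR x ik)^2) / 2))" .
  qed
  also have "\<dots> = ennreal part_tilt"
    unfolding part_tilt_def
      using integrable_p_exp_tilt[OF ip] p0 by (intro nn_integral_eq_integral) auto
  finally show ?thesis .
qed

lemma integral_part_noise: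
  assumes ip: "integrable P p"
  shows "integrable E part_noise" "(\<integral>Z. part_noise Z \<partial>E) = part_tilt"
proof -
  have W0: "\<And>Z. 0 \<le> part_noise Z" unfolding part_noise_def using p0 by simp
  show "integrable E part_noise"
    by (rule integrableI_nn_integral_finite[OF measurable_part_noise _ nn_integral_part_noise[OF ip]]) (simp add: W0)
  have J0: "0 \<le> part_tilt" unfolding part_tilt_def using p0 by simp
  show "(\<integral>Z. part_noise Z \<partial>E) = part_tilt"
    using nn_integral_part_noise[OF ip] W0 J0
      by (subst integral_eq_nn_integral[OF measurable_part_noise]) auto
qed

lemma part_tilt_bounds:
  assumes ip: "integrable P p"
  shows "part0 \<le> part_tilt" "part_tilt \<le> part0 * exp (real n * real K * \<beta>^2 / 2)"
proof -
  show "part0 \<le> part_tilt" unfolding part0_def part_tilt_def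
  proof (rule integral_mono[OF ip integrable_p_exp_tilt[OF ip]])
    fix x
    have "1 \<le> exp ((\<Sum>ik\<in>idx n K. (xR x ik)^2) / 2)" by (simp add: sum_nonneg)
    then show "p x \<le> p x * exp ((\<Sum>ik\<in>idx n K. (xR x ik)^2) / 2)"
      using p0[of x] mult_left_mono[of 1 _ "p x"] by simp
  qed
  have "part_tilt \<le> (\<integral>x. p x * exp (real n * real K * \<beta>^2 / 2) \<partial>P)" unfolding part_tilt_def
  proof (rule integral_p_mono[OF integrable_p_exp_tilt[OF ip]])
    show "exp ((\<Sum>ik\<in>idx n K. (xR x ik)^2) / 2) \<le> exp (real n * real K * \<beta>^2 / 2)"
      if "in_box x" for x
      using sum_xR_sq_le[OF that] by simp
  qed (use ip in simp)
  also have "\<dots> = part0 * exp (real n * real K * \<beta>^2 / 2)" unfolding part0_def by simp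
  finally show "part_tilt \<le> part0 * exp (real n * real K * \<beta>^2 / 2)" .
qed

text \<open>Uses \<open>ln V \<le> ln m + V / m - 1\<close>, which is linear in \<open>V = part_noise Z / part0\<close> and so
  survives averaging over \<open>Z\<close>.\<close>
lemma gap_ge:
  assumes ip: "integrable P p" and A: "part0 > 0"
  shows "- (b_max + ln (part_tilt / part0) + (part_noise Z / part0) / (part_tilt / part0) - 1) / real n
    \<le> gap Z"
proof -
  define m where "m = part_tilt / part0"
  define V where "V = part_noise Z / part0"
  have m1: "1 \<le> m" unfolding m_def using part_tilt_bounds(1)[OF ip] A by simp
  have W: "0 < part_noise Z" by (rule part_noise_pos[OF ip A])
  then have V: "0 < V" unfolding V_def using A by simp
  have "ln (part_pert Z) \<le> ln (exp b_max * part_noise Z)"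
    using part_pert_le_part_noise[OF ip, of Z] part_pert_pos[OF ip A] W
    by (subst ln_le_cancel_iff) auto
  also have "\<dots> = b_max + ln part0 + ln V" unfolding V_def using W A by (simp add: ln_mult ln_div)
  finally have upper: "ln (part_pert Z) \<le> b_max + ln part0 + ln V" .
  have "ln (V / m) \<le> V / m - 1" using V m1 by (intro ln_le_minus_one) simp
  then have "ln V \<le> ln m + V / m - 1" using V m1 by (simp add: ln_div)
  then have "- (b_max + ln m + V / m - 1) \<le> ln part0 - ln (part_pert Z)" using upper by linarith
  then show ?thesis unfolding gap_eq m_def[symmetric] V_def[symmetric]
    using n by (simp add: divide_right_mono)
qed

lemma integral_gap_ge: "- (b_max / real n) - real K * \<beta>^2 / 2 \<le> (\<integral>Z. gap Z \<partial>E)"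
proof (cases "integrable P p \<and> part0 > 0")
  case False
  then have "(\<integral>Z. gap Z \<partial>E) = 0" using gap_degenerate by simp
  moreover have "0 \<le> b_max / real n" "0 \<le> real K * \<beta>^2 / 2" using b_max_nonneg by auto
  ultimately show ?thesis by linarith
next
  case True
  then have ip: "integrable P p" and A: "part0 > 0" by auto
  define m where "m = part_tilt / part0"
  have m1: "1 \<le> m" unfolding m_def using part_tilt_bounds(1)[OF ip] A by simp
  have mu: "m \<le> exp (real n * real K * \<beta>^2 / 2)"
    unfolding m_def using part_tilt_bounds(2)[OF ip] A by (simp add: divide_le_eq mult.commute)
  have iL: "integrable E (\<lambda>Z. - (b_max + ln m + (part_noise Z / part0) / m - 1) / real n)"
    using integral_part_noise(1)[OF ip] by simp
  have "(\<integral>Z. - (b_max + ln m + (part_noise Z / part0) / m - 1) / real n \<partial>E) \<le> (\<integral>Z. gap Z \<partial>E)"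
    by (rule integral_mono[OF iL integrable_gap]) (use gap_ge[OF ip A] in \<open>simp add: m_def\<close>)
  moreover have "(\<integral>Z. - (b_max + ln m + (part_noise Z / part0) / m - 1) / real n \<partial>E)
      = - (b_max + ln m) / real n"
  proof -
    have "(\<integral>Z. - (b_max + ln m + (part_noise Z / part0) / m - 1) / real n \<partial>E)
        = - (b_max + ln m + ((\<integral>Z. part_noise Z \<partial>E) / part0) / m - 1) / real n"
      using integral_part_noise(1)[OF ip] by (simp add: E.prob_space)
    also have "\<dots> = - (b_max + ln m) / real n"
      using integral_part_noise(2)[OF ip] A m1 by (simp add: m_def)
    finally show ?thesis .
  qed
  moreover have "ln m \<le> real n * real K * \<beta>^2 / 2"
    using mu m1 by (metis exp_gt_zero less_le_trans ln_exp ln_le_cancel_iff zero_less_one)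
  ultimately show ?thesis using n by (simp add: field_simps) 
qed

end

locale inference_model =
  fixes n K :: nat and S :: real and Pt0 :: "'a measure" and Pto :: "'b measure"
    and P0 :: "'a \<Rightarrow> (nat \<times> nat \<Rightarrow> real) measure" and \<mu> :: "'c measure"
    and pout :: "(nat \<times> nat \<Rightarrow> real) \<Rightarrow> 'b \<Rightarrow> 'c \<Rightarrow> real"
  assumes n: "n \<ge> 1" and K: "K \<ge> 1" and S: "S > 0"
    and Pt0: "prob_space Pt0" and Pto: "prob_space Pto"
    and P0k: "P0 \<in> measurable Pt0 (prob_algebra (Mat n K))"
    and P0b: "\<And>t. t \<in> space Pt0 \<Longrightarrow> AE x in P0 t. \<forall>ik\<in>idx n K. \<bar>x ik\<bar> \<le> S"
    and \<mu>: "sigma_finite_measure \<mu>"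
    and poutm: "(\<lambda>(X, to, y). pout X to y) \<in> borel_measurable (Mat n K \<Otimes>\<^sub>M Pto \<Otimes>\<^sub>M \<mu>)"
    and pout0: "\<And>X to y. 0 \<le> pout X to y"
    and poutn: "\<And>X to. X \<in> space (Mat n K) \<Longrightarrow> to \<in> space Pto \<Longrightarrow>
        (\<integral>\<^sup>+ y. ennreal (pout X to y) \<partial>\<mu>) = 1"
begin

interpretation \<mu>: sigma_finite_measure \<mu> by (rule \<mu>)

abbreviation "\<Omega> \<equiv> Pt0 \<Otimes>\<^sub>M Pto \<Otimes>\<^sub>M Mat n K \<Otimes>\<^sub>M \<mu> \<Otimes>\<^sub>M Mat n K"
definition "channel X to = density \<mu> (\<lambda>y. ennreal (pout X to y))" for X to

lemma P0_subprob[measurable]: "P0 \<in> measurable Pt0 (subprob_algebra (Mat n K))"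
  by (rule measurable_prob_algebraD[OF P0k])

lemma measurable_pout[measurable (raw)]:
  assumes "f \<in> measurable M (Mat n K)" "g \<in> measurable M Pto" "h \<in> measurable M \<mu>"
  shows "(\<lambda>x. pout (f x) (g x) (h x)) \<in> borel_measurable M"
  using measurable_compose[OF measurable_Pair[OF assms(1) measurable_Pair[OF assms(2,3)]] poutm]
    by simp

lemma prob_space_channel:
  assumes X: "X \<in> space (Mat n K)" and to: "to \<in> space Pto"
  shows "prob_space (channel X to)"
proof (rule prob_spaceI)
  have m: "(\<lambda>y. ennreal (pout X to y)) \<in> borel_measurable \<mu>" using X to by measurable
  have "emeasure (channel X to) (space (channel X to))
      = (\<integral>\<^sup>+y. ennreal (pout X to y) * indicator (space \<mu>) y \<partial>\<mu>)"
    unfolding channel_def by (simp add: emeasure_density m)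
  also have "\<dots> = (\<integral>\<^sup>+y. ennreal (pout X to y) \<partial>\<mu>)" by (intro nn_integral_cong) simp
  also have "\<dots> = 1" using poutn[OF X to] .
  finally show "emeasure (channel X to) (space (channel X to)) = 1" .
qed

lemma sets_channel[simp]: "sets (channel X to) = sets \<mu>" unfolding channel_def by simp
lemma space_channel[simp]: "space (channel X to) = space \<mu>" unfolding channel_def by simp

lemma measurable_channel[measurable (raw)]:
  assumes f[measurable]: "f \<in> measurable M (Mat n K)" and g[measurable]: "g \<in> measurable M Pto"
  shows "(\<lambda>x. channel (f x) (g x)) \<in> measurable M (subprob_algebra \<mu>)"
proof (rule measurable_subprob_algebra)
  fix a assume a: "a \<in> space M"
  show "subprob_space (channel (f a) (g a))"
    using prob_space_channel[OF measurable_space[OF f a] measurable_space[OF g a]]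
    by (rule prob_space_imp_subprob_space)
  show "sets (channel (f a) (g a)) = sets \<mu>" by simp
next
  fix A assume A[measurable]: "A \<in> sets \<mu>"
  have "(\<lambda>a. \<integral>\<^sup>+y. ennreal (pout (f a) (g a) y) * indicator A y \<partial>\<mu>) \<in> borel_measurable M"
    by measurable
  then show "(\<lambda>a. emeasure (channel (f a) (g a)) A) \<in> borel_measurable M"
    unfolding channel_def
      by (subst measurable_cong[where g="\<lambda>a. \<integral>\<^sup>+y. ennreal (pout (f a) (g a) y) * indicator A y \<partial>\<mu>"])
      (auto simp: emeasure_density)
qed

lemma measurable_const_Gauss[measurable]:
  "(\<lambda>x. Gauss n K) \<in> measurable M (subprob_algebra (Gauss n K))"
  by (rule measurable_const) (simp add: space_subprob_algebra prob_space_imp_subprob_space prob_space_Gauss)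

lemma measurable_const_Pto[measurable]: "(\<lambda>x. Pto) \<in> measurable M (subprob_algebra Pto)"
  by (rule measurable_const) (simp add: space_subprob_algebra prob_space_imp_subprob_space Pto)

lemma measurable_id_Gauss[measurable]: "(\<lambda>x. x) \<in> measurable (Gauss n K) (Mat n K)"
  by (rule measurable_ident_sets) (rule sets_Gauss)

text \<open>The conditional laws of \<open>(\<theta>\<^sub>0, \<theta>\<^sub>o\<^sub>u\<^sub>t, X, Y, Z)\<close> given its leading coordinates.\<close>
definition "draw_Z t0 to X y = bind (Gauss n K) (\<lambda>Z. return \<Omega> (t0, to, X, y, Z))" for t0 to X y
definition "draw_y t0 to X = bind (channel X to) (\<lambda>y. draw_Z t0 to X y)" for t0 to X
definition "draw_X t0 to = bind (P0 t0) (\<lambda>X. draw_y t0 to X)" for t0 to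
definition "draw_to t0 = bind Pto (\<lambda>to. draw_X t0 to)" for t0

lemma law_eq_bind: "law Pt0 Pto P0 \<mu> pout n K = bind Pt0 draw_to"
  unfolding law_def draw_to_def draw_X_def draw_y_def draw_Z_def channel_def ..

lemma measurable_draw_Z[measurable (raw)]:
  assumes [measurable]: "f1 \<in> measurable M Pt0" "f2 \<in> measurable M Pto"
    "f3 \<in> measurable M (Mat n K)" "f4 \<in> measurable M \<mu>"
  shows "(\<lambda>x. draw_Z (f1 x) (f2 x) (f3 x) (f4 x)) \<in> measurable M (subprob_algebra \<Omega>)"
  unfolding draw_Z_def by measurable

lemma measurable_draw_y[measurable (raw)]:
  assumes [measurable]: "f1 \<in> measurable M Pt0" "f2 \<in> measurable M Pto"
    "f3 \<in> measurable M (Mat n K)"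
  shows "(\<lambda>x. draw_y (f1 x) (f2 x) (f3 x)) \<in> measurable M (subprob_algebra \<Omega>)"
  unfolding draw_y_def by measurable

lemma measurable_draw_X[measurable (raw)]:
  assumes [measurable]: "f1 \<in> measurable M Pt0" "f2 \<in> measurable M Pto"
  shows "(\<lambda>x. draw_X (f1 x) (f2 x)) \<in> measurable M (subprob_algebra \<Omega>)"
  unfolding draw_X_def by measurable

lemma measurable_draw_to: "draw_to \<in> measurable Pt0 (subprob_algebra \<Omega>)"
  unfolding draw_to_def by measurable

lemma measurable_draw_Z_channel: "t0 \<in> space Pt0 \<Longrightarrow> to \<in> space Pto \<Longrightarrow> X \<in> space (Mat n K) \<Longrightarrow>
  (\<lambda>y. draw_Z t0 to X y) \<in> measurable (channel X to) (subprob_algebra \<Omega>)"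
  by (simp add: measurable_cong_sets[OF sets_channel refl])

lemma measurable_draw_y_prior: "t0 \<in> space Pt0 \<Longrightarrow> to \<in> space Pto \<Longrightarrow>
  (\<lambda>X. draw_y t0 to X) \<in> measurable (P0 t0) (subprob_algebra \<Omega>)"
  by (simp add: measurable_cong_sets[OF sets_kernel[OF P0_subprob] refl])

lemma measurable_draw_X_param:
  "t0 \<in> space Pt0 \<Longrightarrow> (\<lambda>to. draw_X t0 to) \<in> measurable Pto (subprob_algebra \<Omega>)"
  by simp

lemma measurable_F0: "F0 P0 pout n \<in> borel_measurable \<Omega>"
proof -
  let ?Y = "\<lambda>\<omega>::'a \<times> 'b \<times> _ \<times> 'c \<times> _. fst (snd (snd (snd \<omega>)))"
  have "(\<lambda>\<omega>. \<integral>x. pout x (fst (snd \<omega>)) (?Y \<omega>) \<partial>P0 (fst \<omega>)) \<in> borel_measurable \<Omega>"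
    by (rule integral_measurable_subprob_algebra2[where N="Mat n K"]) measurable
  moreover have "F0 P0 pout n
      = (\<lambda>\<omega>. - (1 / real n) * ln (\<integral>x. pout x (fst (snd \<omega>)) (?Y \<omega>) \<partial>P0 (fst \<omega>)))"
    by (simp add: F0_def fun_eq_iff split: prod.split)
  ultimately show ?thesis by simp
qed

lemma measurable_Fpert: "Fpert P0 pout n K L \<in> borel_measurable \<Omega>"
proof -
  let ?Y = "\<lambda>\<omega>::'a \<times> 'b \<times> _ \<times> 'c \<times> _. fst (snd (snd (snd \<omega>)))"
  let ?V = "\<lambda>\<omega>::'a \<times> 'b \<times> _ \<times> 'c \<times> _.
    (\<lambda>ik. mmul K (fst (snd (snd \<omega>))) (sqrtm K L) ik + snd (snd (snd (snd \<omega>))) ik)"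
  have "(\<lambda>\<omega>. \<integral>x. pout x (fst (snd \<omega>)) (?Y \<omega>) * exp (- Ham n K L x (?V \<omega>)) \<partial>P0 (fst \<omega>))
      \<in> borel_measurable \<Omega>"
    by (rule integral_measurable_subprob_algebra2[where N="Mat n K"])
      (unfold Ham_def Let_def mmul_def, measurable)
  moreover have "Fpert P0 pout n K L = (\<lambda>\<omega>. - (1 / real n)
      * ln (\<integral>x. pout x (fst (snd \<omega>)) (?Y \<omega>) * exp (- Ham n K L x (?V \<omega>)) \<partial>P0 (fst \<omega>)))"
    by (simp add: Fpert_def fun_eq_iff split: prod.split)
  ultimately show ?thesis by simp
qed

lemma draw_Z_eq_distr:
  assumes "t0 \<in> space Pt0" "to \<in> space Pto" "X \<in> space (Mat n K)" "y \<in> space \<mu>"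
  shows "draw_Z t0 to X y = distr (Gauss n K) \<Omega> (\<lambda>Z. (t0, to, X, y, Z))"
  unfolding draw_Z_def
proof (rule bind_return_distr')
  show "space (Gauss n K) \<noteq> {}" using prob_space_Gauss by (rule prob_space.not_empty)
  show "(\<lambda>Z. (t0, to, X, y, Z)) \<in> measurable (Gauss n K) \<Omega>" using assms by measurable
qed

lemma prob_space_P0: "t0 \<in> space Pt0 \<Longrightarrow> prob_space (P0 t0)"
  using measurable_space[OF P0k] by (simp add: space_prob_algebra)

lemma AE_P0_bounded:
  "t0 \<in> space Pt0 \<Longrightarrow> AE X in P0 t0. X \<in> space (Mat n K) \<and> (\<forall>ik\<in>idx n K. \<bar>X ik\<bar> \<le> S)"
  using P0b[of t0] AE_space[of "P0 t0"] sets_eq_imp_space_eq[OF sets_kernel[OF P0_subprob]]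
  by (auto elim: eventually_mono)

lemma integral_law_le:
  fixes f :: "_ \<Rightarrow> real"
  assumes f[measurable]: "f \<in> borel_measurable \<Omega>" and c: "0 \<le> c"
    and H: "\<And>t0 to X y. t0 \<in> space Pt0 \<Longrightarrow> to \<in> space Pto \<Longrightarrow> X \<in> space (Mat n K) \<Longrightarrow>
       (\<forall>ik\<in>idx n K. \<bar>X ik\<bar> \<le> S) \<Longrightarrow> y \<in> space \<mu> \<Longrightarrow> (\<integral>Z. f (t0, to, X, y, Z) \<partial>Gauss n K) \<le> c"
  shows "(\<integral>\<omega>. f \<omega> \<partial>law Pt0 Pto P0 \<mu> pout n K) \<le> c"
  unfolding law_eq_bind
proof (rule integral_bind_le[OF Pt0 measurable_draw_to c], rule AE_I2)
  fix t0 assume t0: "t0 \<in> space Pt0"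
  show "(\<integral>\<omega>. f \<omega> \<partial>draw_to t0) \<le> c" unfolding draw_to_def
  proof (rule integral_bind_le[OF Pto measurable_draw_X_param[OF t0] c], rule AE_I2)
    fix to assume to: "to \<in> space Pto"
    show "(\<integral>\<omega>. f \<omega> \<partial>draw_X t0 to) \<le> c" unfolding draw_X_def
    proof (rule integral_bind_le[OF prob_space_P0[OF t0] measurable_draw_y_prior[OF t0 to] c])
      show "AE X in P0 t0. (\<integral>\<omega>. f \<omega> \<partial>draw_y t0 to X) \<le> c"
        using AE_P0_bounded[OF t0]
      proof eventually_elim
        case (elim X)
        then have X: "X \<in> space (Mat n K)" and Xb: "\<forall>ik\<in>idx n K. \<bar>X ik\<bar> \<le> S" by auto
        show ?case unfolding draw_y_def
        proof (rule integral_bind_le[OF prob_space_channel[OF X to] measurable_draw_Z_channel[OF t0 to X] c], rule AE_I2)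
          fix y assume "y \<in> space (channel X to)"
          then have y: "y \<in> space \<mu>" by simp
          have "(\<integral>\<omega>. f \<omega> \<partial>draw_Z t0 to X y) = (\<integral>Z. f (t0, to, X, y, Z) \<partial>Gauss n K)"
            unfolding draw_Z_eq_distr[OF t0 to X y]
              by (rule integral_distr) (use t0 to X y in measurable)
          then show "(\<integral>\<omega>. f \<omega> \<partial>draw_Z t0 to X y) \<le> c" using H[OF t0 to X Xb y] by simp
        qed
      qed
    qed
  qed
qed

lemma integral_law_ge:
  fixes f :: "_ \<Rightarrow> real"
  assumes f[measurable]: "f \<in> borel_measurable \<Omega>" and c: "c \<le> 0"
    and H: "\<And>t0 to X y. t0 \<in> space Pt0 \<Longrightarrow> to \<in> space Pto \<Longrightarrow> X \<in> space (Mat n K) \<Longrightarrow>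
       (\<forall>ik\<in>idx n K. \<bar>X ik\<bar> \<le> S) \<Longrightarrow> y \<in> space \<mu> \<Longrightarrow> c \<le> (\<integral>Z. f (t0, to, X, y, Z) \<partial>Gauss n K)"
  shows "c \<le> (\<integral>\<omega>. f \<omega> \<partial>law Pt0 Pto P0 \<mu> pout n K)"
proof -
  have "(\<integral>\<omega>. - f \<omega> \<partial>law Pt0 Pto P0 \<mu> pout n K) \<le> - c"
    by (rule integral_law_le) (use c H in auto)
  then show ?thesis by simp
qed

lemma nn_integral_law_le:
  assumes f[measurable]: "f \<in> borel_measurable \<Omega>"
    and H: "\<And>t0 to X y. t0 \<in> space Pt0 \<Longrightarrow> to \<in> space Pto \<Longrightarrow> X \<in> space (Mat n K) \<Longrightarrow>
       (\<forall>ik\<in>idx n K. \<bar>X ik\<bar> \<le> S) \<Longrightarrow> y \<in> space \<mu> \<Longrightarrow> (\<integral>\<^sup>+Z. f (t0, to, X, y, Z) \<partial>Gauss n K) \<le> c"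
  shows "(\<integral>\<^sup>+\<omega>. f \<omega> \<partial>law Pt0 Pto P0 \<mu> pout n K) \<le> c"
  unfolding law_eq_bind
proof (rule nn_integral_bind_le[OF Pt0 measurable_draw_to f], rule AE_I2)
  fix t0 assume t0: "t0 \<in> space Pt0"
  show "(\<integral>\<^sup>+\<omega>. f \<omega> \<partial>draw_to t0) \<le> c" unfolding draw_to_def
  proof (rule nn_integral_bind_le[OF Pto measurable_draw_X_param[OF t0] f], rule AE_I2)
    fix to assume to: "to \<in> space Pto"
    show "(\<integral>\<^sup>+\<omega>. f \<omega> \<partial>draw_X t0 to) \<le> c" unfolding draw_X_def
    proof (rule nn_integral_bind_le[OF prob_space_P0[OF t0] measurable_draw_y_prior[OF t0 to] f])
      show "AE X in P0 t0. (\<integral>\<^sup>+\<omega>. f \<omega> \<partial>draw_y t0 to X) \<le> c"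
        using AE_P0_bounded[OF t0]
      proof eventually_elim
        case (elim X)
        then have X: "X \<in> space (Mat n K)" and Xb: "\<forall>ik\<in>idx n K. \<bar>X ik\<bar> \<le> S" by auto
        show ?case unfolding draw_y_def
        proof (rule nn_integral_bind_le[OF prob_space_channel[OF X to] measurable_draw_Z_channel[OF t0 to X] f], rule AE_I2)
          fix y assume "y \<in> space (channel X to)"
          then have y: "y \<in> space \<mu>" by simp
          have "(\<integral>\<^sup>+\<omega>. f \<omega> \<partial>draw_Z t0 to X y) = (\<integral>\<^sup>+Z. f (t0, to, X, y, Z) \<partial>Gauss n K)"
          proof -
            have T: "(\<lambda>Z. (t0, to, X, y, Z)) \<in> measurable (Gauss n K) \<Omega>"
              using t0 to X y by measurable
            have fd: "f \<in> borel_measurable (distr (Gauss n K) \<Omega> (\<lambda>Z. (t0, to, X, y, Z)))"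
              by (simp add: measurable_cong_sets[OF sets_distr refl])
            show ?thesis
              unfolding draw_Z_eq_distr[OF t0 to X y] by (rule nn_integral_distr[OF T fd])
          qed
          then show "(\<integral>\<^sup>+\<omega>. f \<omega> \<partial>draw_Z t0 to X y) \<le> c" using H[OF t0 to X Xb y] by simp
        qed
      qed
    qed
  qed
qed

lemma sets_law: "sets (law Pt0 Pto P0 \<mu> pout n K) = sets \<Omega>"
  unfolding law_eq_bind
    by (rule sets_bind[OF sets_kernel[OF measurable_draw_to] prob_space.not_empty[OF Pt0]])

lemma gap_noise_average_bounds:
  assumes t0: "t0 \<in> space Pt0" and to: "to \<in> space Pto" and X: "X \<in> space (Mat n K)"
    and Xb: "\<forall>ik\<in>idx n K. \<bar>X ik\<bar> \<le> S" and y: "y \<in> space \<mu>"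
    and L: "L \<in> DnK s K" and s: "0 < s"
  defines "D \<equiv> \<lambda>\<omega>. Fpert P0 pout n K L \<omega> - F0 P0 pout n \<omega>"
    and "\<beta> \<equiv> real K * S * sqrt (s * (2 * real K + 1))"
  shows "(\<integral>\<^sup>+Z. ennreal (norm (D (t0, to, X, y, Z))) \<partial>Gauss n K)
      \<le> ennreal (3/2 * real K * \<beta>^2 + \<beta> * real K)"
    and "(\<integral>Z. D (t0, to, X, y, Z) \<partial>Gauss n K) \<le> 3/2 * real K * \<beta>^2"
    and "- 2 * real K * \<beta>^2 \<le> (\<integral>Z. D (t0, to, X, y, Z) \<partial>Gauss n K)"
proof -
  have "(\<lambda>x. pout x to y) \<in> borel_measurable (Mat n K)" using to y by measurable
  then interpret C: gibbs_gap n K S "sqrt (s * (2 * real K + 1))" L "P0 t0" "\<lambda>x. pout x to y" X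
    unfolding gibbs_gap_def
    using n S s abs_sqrtm_DnK_le[OF K L s] prob_space_P0[OF t0] sets_kernel[OF P0_subprob t0]
      P0b[OF t0] pout0 Xb
    by auto
  have gap: "D (t0, to, X, y, Z) = C.gap Z" for Z
    unfolding D_def C.gap_def C.part_pert_def C.part0_def C.Y_def by (simp add: Fpert_def F0_def)
  have b_max: "C.b_max / real n = 3/2 * real K * \<beta>^2"
    using n unfolding C.b_max_def C.\<beta>_def \<beta>_def by simp
  have "(\<integral>\<^sup>+Z. ennreal (norm (D (t0, to, X, y, Z))) \<partial>Gauss n K)
      \<le> ennreal ((C.b_max + C.\<beta> * (real n * real K)) / real n)"
    unfolding gap by (simp add: C.nn_integral_abs_gap_le)
  also have "(C.b_max + C.\<beta> * (real n * real K)) / real n = 3/2 * real K * \<beta>^2 + \<beta> * real K"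
    using n unfolding C.b_max_def C.\<beta>_def \<beta>_def by (simp add: field_simps)
  finally show "(\<integral>\<^sup>+Z. ennreal (norm (D (t0, to, X, y, Z))) \<partial>Gauss n K)
      \<le> ennreal (3/2 * real K * \<beta>^2 + \<beta> * real K)" .
  show "(\<integral>Z. D (t0, to, X, y, Z) \<partial>Gauss n K) \<le> 3/2 * real K * \<beta>^2"
    using C.integral_gap_le b_max by (simp add: gap)
  show "- 2 * real K * \<beta>^2 \<le> (\<integral>Z. D (t0, to, X, y, Z) \<partial>Gauss n K)"
    using C.integral_gap_ge b_max unfolding C.\<beta>_def \<beta>_def by (simp add: gap)
qed

lemma integrable_free_energy_gap:
  assumes L: "L \<in> DnK s K" and s: "0 < s"
  shows "integrable (law Pt0 Pto P0 \<mu> pout n K) (\<lambda>\<omega>. Fpert P0 pout n K L \<omega> - F0 P0 pout n \<omega>)"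
proof -
  let ?M = "law Pt0 Pto P0 \<mu> pout n K"
  define \<beta> where "\<beta> = real K * S * sqrt (s * (2 * real K + 1))"
  define D where "D = (\<lambda>\<omega>. Fpert P0 pout n K L \<omega> - F0 P0 pout n \<omega>)"
  have D_meas: "D \<in> borel_measurable \<Omega>" unfolding D_def
    using measurable_F0 measurable_Fpert by measurable
  have bound: "(\<integral>\<^sup>+\<omega>. ennreal (norm (D \<omega>)) \<partial>?M) \<le> ennreal (3/2 * real K * \<beta>^2 + \<beta> * real K)"
    unfolding \<beta>_def
    by (rule nn_integral_law_le, use D_meas in measurable, unfold D_def)
      (rule gap_noise_average_bounds(1)[OF _ _ _ _ _ L s]; assumption)
  have "(\<integral>\<^sup>+\<omega>. ennreal (norm (D \<omega>)) \<partial>?M) < \<infinity>"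
    using le_less_trans[OF bound ennreal_less_top] by simp
  moreover have "D \<in> borel_measurable ?M"
    using D_meas by (simp add: measurable_cong_sets[OF sets_law refl])
  ultimately show ?thesis unfolding integrable_iff_bounded D_def by simp
qed

lemma free_energy_diff_le:
  assumes L: "L \<in> DnK s K" and s: "0 < s"
    and F0: "integrable (law Pt0 Pto P0 \<mu> pout n K) (F0 P0 pout n)"
  shows "\<bar>(\<integral>\<omega>. F0 P0 pout n \<omega> \<partial>law Pt0 Pto P0 \<mu> pout n K)
          - (\<integral>\<omega>. Fpert P0 pout n K L \<omega> \<partial>law Pt0 Pto P0 \<mu> pout n K)\<bar>
         \<le> 2 * real K ^ 3 * S^2 * (2 * real K + 1) * s"
proof -
  let ?M = "law Pt0 Pto P0 \<mu> pout n K"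
  define \<beta> where "\<beta> = real K * S * sqrt (s * (2 * real K + 1))"
  define D where "D = (\<lambda>\<omega>. Fpert P0 pout n K L \<omega> - F0 P0 pout n \<omega>)"
  have D_meas: "D \<in> borel_measurable \<Omega>" unfolding D_def
    using measurable_F0 measurable_Fpert by measurable
  have "integrable ?M (Fpert P0 pout n K L)"
    using Bochner_Integration.integrable_add[OF F0 integrable_free_energy_gap[OF L s]] by simp
  then have eq: "(\<integral>\<omega>. F0 P0 pout n \<omega> \<partial>?M) - (\<integral>\<omega>. Fpert P0 pout n K L \<omega> \<partial>?M) = - (\<integral>\<omega>. D \<omega> \<partial>?M)"
    unfolding D_def using F0 by simp
  have "(\<integral>\<omega>. D \<omega> \<partial>?M) \<le> 3/2 * real K * \<beta>^2"
    unfolding \<beta>_def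
    by (rule integral_law_le[OF D_meas], simp, unfold D_def)
      (rule gap_noise_average_bounds(2)[OF _ _ _ _ _ L s]; assumption)
  moreover have "- 2 * real K * \<beta>^2 \<le> (\<integral>\<omega>. D \<omega> \<partial>?M)"
    unfolding \<beta>_def
    by (rule integral_law_ge[OF D_meas], simp, unfold D_def)
      (rule gap_noise_average_bounds(3)[OF _ _ _ _ _ L s]; assumption)
  ultimately have "\<bar>\<integral>\<omega>. D \<omega> \<partial>?M\<bar> \<le> 2 * real K * \<beta>^2" by (simp add: abs_le_iff)
  also have "2 * real K * \<beta>^2 = 2 * real K ^ 3 * S^2 * (2 * real K + 1) * s"
    unfolding \<beta>_def using s by (simp add: power2_eq_square power3_eq_cube algebra_simps)
  finally show ?thesis unfolding eq by simp
qed

end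

lemma tendsto_iff_of_abs_diff_le:
  fixes a b c :: "nat \<Rightarrow> real"
  assumes "eventually (\<lambda>n. \<bar>a n - b n\<bar> \<le> c n) sequentially" and "c \<longlonglongrightarrow> 0"
  shows "a \<longlonglongrightarrow> l \<longleftrightarrow> b \<longlonglongrightarrow> l"
proof -
  have d: "(\<lambda>n. a n - b n) \<longlonglongrightarrow> 0"
  proof (rule Lim_null_comparison)
    show "\<forall>\<^sub>F n in sequentially. norm (a n - b n) \<le> c n" using assms(1) by simp
  qed (rule assms(2))
  show ?thesis
  proof
    assume "a \<longlonglongrightarrow> l"
    from tendsto_diff[OF this d] show "b \<longlonglongrightarrow> l" by simp
  next
    assume "b \<longlonglongrightarrow> l"
    from tendsto_add[OF this d] show "a \<longlonglongrightarrow> l" by simp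
  qed
qed

theorem lemma1:
  fixes K :: nat and S :: real and s :: "nat \<Rightarrow> real"
    and Pt0 :: "nat \<Rightarrow> 'a measure" and Pto :: "nat \<Rightarrow> 'b measure"
    and P0 :: "nat \<Rightarrow> 'a \<Rightarrow> (nat \<times> nat \<Rightarrow> real) measure"
    and \<mu> :: "nat \<Rightarrow> 'c measure"
    and pout :: "nat \<Rightarrow> (nat \<times> nat \<Rightarrow> real) \<Rightarrow> 'b \<Rightarrow> 'c \<Rightarrow> real"
  assumes K: "K \<ge> 1" and S: "S > 0"
    and s_pos: "\<And>n. s n > 0" and s_lim: "s \<longlonglongrightarrow> 0"
    and Pt0: "\<And>n. n \<ge> 1 \<Longrightarrow> prob_space (Pt0 n)"
    and Pto: "\<And>n. n \<ge> 1 \<Longrightarrow> prob_space (Pto n)"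
    and P0_kernel: "\<And>n. n \<ge> 1 \<Longrightarrow> P0 n \<in> measurable (Pt0 n) (prob_algebra (Mat n K))"
    and P0_bounded: "\<And>n t. n \<ge> 1 \<Longrightarrow> t \<in> space (Pt0 n) \<Longrightarrow>
        AE x in P0 n t. \<forall>ik\<in>idx n K. \<bar>x ik\<bar> \<le> S"
    and \<mu>: "\<And>n. n \<ge> 1 \<Longrightarrow> sigma_finite_measure (\<mu> n)"
    and pout_meas: "\<And>n. n \<ge> 1 \<Longrightarrow>
        (\<lambda>(X, to, y). pout n X to y) \<in> borel_measurable (Mat n K \<Otimes>\<^sub>M Pto n \<Otimes>\<^sub>M \<mu> n)"
    and pout_nonneg: "\<And>n X to y. n \<ge> 1 \<Longrightarrow> pout n X to y \<ge> 0"
    and pout_normalized: "\<And>n X to. n \<ge> 1 \<Longrightarrow> X \<in> space (Mat n K) \<Longrightarrow> to \<in> space (Pto n) \<Longrightarrow>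
        (\<integral>\<^sup>+ y. ennreal (pout n X to y) \<partial>(\<mu> n)) = 1"
    and F0_finite: "\<And>n. n \<ge> 1 \<Longrightarrow>
        integrable (law (Pt0 n) (Pto n) (P0 n) (\<mu> n) (pout n) n K) (F0 (P0 n) (pout n) n)"
  shows "(\<exists>C. \<forall>n\<ge>1. \<forall>L\<in>DnK (s n) K.
            \<bar>(\<integral>\<omega>. F0 (P0 n) (pout n) n \<omega> \<partial>(law (Pt0 n) (Pto n) (P0 n) (\<mu> n) (pout n) n K))
             - (\<integral>\<omega>. Fpert (P0 n) (pout n) n K L \<omega> \<partial>(law (Pt0 n) (Pto n) (P0 n) (\<mu> n) (pout n) n K))\<bar>
            \<le> C * s n)
       \<and> (\<forall>Ls :: nat \<Rightarrow> (nat \<times> nat \<Rightarrow> real). \<forall>l :: real. (\<forall>n. Ls n \<in> DnK (s n) K) \<longrightarrow>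
            ((\<lambda>n. \<integral>\<omega>. F0 (P0 n) (pout n) n \<omega> \<partial>(law (Pt0 n) (Pto n) (P0 n) (\<mu> n) (pout n) n K))
               \<longlonglongrightarrow> l
             \<longleftrightarrow> (\<lambda>n. \<integral>\<omega>. Fpert (P0 n) (pout n) n K (Ls n) \<omega> \<partial>(law (Pt0 n) (Pto n) (P0 n) (\<mu> n) (pout n) n K))
               \<longlonglongrightarrow> l))"
proof -
  define C where "C = 2 * real K ^ 3 * S^2 * (2 * real K + 1)"
  let ?base = "\<lambda>n. \<integral>\<omega>. F0 (P0 n) (pout n) n \<omega> \<partial>(law (Pt0 n) (Pto n) (P0 n) (\<mu> n) (pout n) n K)"
  let ?pert = "\<lambda>n L. \<integral>\<omega>. Fpert (P0 n) (pout n) n K L \<omega> \<partial>(law (Pt0 n) (Pto n) (P0 n) (\<mu> n) (pout n) n K)"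
  have bound: "\<bar>?base n - ?pert n L\<bar> \<le> C * s n" if n: "n \<ge> 1" and L: "L \<in> DnK (s n) K" for n L
  proof -
    interpret inference_model n K S "Pt0 n" "Pto n" "P0 n" "\<mu> n" "pout n"
      unfolding inference_model_def
      using n K S Pt0[OF n] Pto[OF n] P0_kernel[OF n] P0_bounded[OF n] \<mu>[OF n] pout_meas[OF n]
        pout_nonneg[OF n] pout_normalized[OF n] by auto
    show ?thesis using free_energy_diff_le[OF L s_pos F0_finite[OF n]] unfolding C_def by simp
  qed
  have Cs: "(\<lambda>n. C * s n) \<longlonglongrightarrow> 0" using tendsto_mult_right_zero[OF s_lim] by simp
  show ?thesis
  proof (intro conjI allI impI)
    show "\<exists>C. \<forall>n\<ge>1. \<forall>L\<in>DnK (s n) K. \<bar>?base n - ?pert n L\<bar> \<le> C * s n"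
      using bound by blast
    fix Ls :: "nat \<Rightarrow> nat \<times> nat \<Rightarrow> real" and l :: real
    assume Ls: "\<forall>n. Ls n \<in> DnK (s n) K"
    have "eventually (\<lambda>n. \<bar>?base n - ?pert n (Ls n)\<bar> \<le> C * s n) sequentially"
      by (rule eventually_mono[OF eventually_ge_at_top[of 1]], rule bound) (use Ls in simp_all)
    then show "?base \<longlonglongrightarrow> l \<longleftrightarrow> (\<lambda>n. ?pert n (Ls n)) \<longlonglongrightarrow> l"
      by (rule tendsto_iff_of_abs_diff_le[OF _ Cs])
  qed
qed

end
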